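(* Let $(\Omega,\mathcal F,P,(\mathcal F_t)_{t=0}^T)$ be a filtered probability space with $\mathcal F_0$ trivial, and let $I$ be a finite set of agents. For each $i\in I$ let $(E^i_t)_{t=0}^{T-1}$ be an adapted nonnegative process (business-as-usual emissions of agent $i$ in $[t,t+1]$), and let $C^i_t:[0,\infty)\times\Omega\to\mathbb R$ be $\mathcal B([0,\infty))\otimes\mathcal F_t$-measurable with $x\mapsto C^i_t(x)(\omega)$ strictly convex and continuous and $C^i_t(0)=0$ for each $\omega$. Define the abatement volume $c^i_t(a)(\omega)=\arg\min\{C^i_t(x)(\omega)-ax: x\in[0,E^i_t(\omega)]\}$ for $a\ge 0$. Let $\pi>0$ be the penalty, and let $\gamma^i$, $i\in I$, be $\mathcal F_T$-measurable random variables (effective initial allocations) such that the $\mathcal F_{T-1}$-conditional distribution of $\sum_{i\in I}\gamma^i$ has almost surely no point masses (in particular $P(\sum_i\gamma^i=X)=0$ for every $\mathcal F_{T-1}$-measurable $X$). Let $U^i:\mathbb R\to\mathbb R$ be continuous, strictly increasing and concave, and $u^i(X)=E(U^i(X))$ whenever this expectation is finite or $+\infty$. For an adapted price process $A=(A_t)_{t=0}^T$ and an admissible policy $(\vartheta^i,\xi^i)\in\mathcal U^i:=\{(\vartheta^i,\xi^i): 0\le \xi^i_t\le E^i_t,\ t=0,\dots,T-1\}$ (with $\vartheta^i=(\vartheta^i_t)_{t=0}^T$, $\xi^i=(\xi^i_t)_{t=0}^{T-1}$ adapted) define $$L^{A,i}(\vartheta^i,\xi^i)=-\sum_{t=0}^{T-1}\big(\vartheta^i_tA_t+C^i_t(\xi^i_t)\big)-\vartheta^i_TA_T-\pi\Big(\sum_{t=0}^{T-1}(E^i_t-\xi^i_t-\vartheta^i_t)-\gamma^i-\vartheta^i_T\Big)^+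 .$$ Suppose $A^*=(A^*_t)_{t=0}^T$ is an equilibrium allowance price process, i.e. for each $i\in I$ there is $(\vartheta^{*i},\xi^{*i})\in\mathcal U^i$ with $u^i(L^{A^*,i}(\vartheta^{*i},\xi^{*i}))$ finite such that (i) $\sum_{i\in I}\vartheta^{*i}_t=0$ for all $t=0,\dots,T$, and (ii) $u^i(L^{A^*,i}(\vartheta^{*i},\xi^{*i}))\ge u^i(L^{A^*,i}(\vartheta^i,\xi^i))$ for every $(\vartheta^i,\xi^i)\in\mathcal U^i$ for which the right-hand side exists. Then: (a) there exists a probability measure $Q$ equivalent to $P$ such that $(A^*_t)_{t=0}^T$ is a $Q$-martingale; (b) for each $i\in I$, $\xi^{*i}_t=c^i_t(A^*_t)$ for $t=0,\dots,T-1$; (c) $A^*_T=\pi\,1_{\{\sum_{i\in I}(\sum_{t=0}^{T-1}(E^i_t-\xi^{*i}_t)-\gamma^i)\ge 0\}}$.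
   Context: Emissions market model: $\vartheta^i_t$ is the change at time $t$ in the number of allowances held by agent $i$, $\xi^i_t$ is the emission reduction of agent $i$ in $[t,t+1]$, $A_t$ is the allowance spot price, and a penalty $\pi$ is paid at $T$ per uncovered pollutant unit. The argmin defining $c^i_t(a)(\omega)$ is attained at a unique point by strict convexity and continuity. *)

theory Defs
  imports "HOL-Probability.Probability"
begin

definition strict_convex_on :: "real set \<Rightarrow> (real \<Rightarrow> real) \<Rightarrow> bool" where
  "strict_convex_on S f \<longleftrightarrow>
     (\<forall>x\<in>S. \<forall>y\<in>S. \<forall>u::real. x \<noteq> y \<longrightarrow> 0 < u \<longrightarrow> u < 1 \<longrightarrow>
        f (u * x + (1 - u) * y) < u * f x + (1 - u) * f y)"

definition filtration_on :: "'a measure \<Rightarrow> (nat \<Rightarrow> 'a measure) \<Rightarrow> nat \<Rightarrow> bool" where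
  "filtration_on M F T \<longleftrightarrow>
     (\<forall>t\<le>T. subalgebra M (F t)) \<and>
     (\<forall>s t. s \<le> t \<longrightarrow> t \<le> T \<longrightarrow> sets (F s) \<subseteq> sets (F t))"

definition equiv_prob :: "'a measure \<Rightarrow> 'a measure \<Rightarrow> bool" where
  "equiv_prob Q M \<longleftrightarrow> prob_space Q \<and> sets Q = sets M \<and>
     (\<forall>N\<in>sets M. emeasure Q N = 0 \<longleftrightarrow> emeasure M N = 0)"

definition martingale_on :: "'a measure \<Rightarrow> (nat \<Rightarrow> 'a measure) \<Rightarrow> nat \<Rightarrow> (nat \<Rightarrow> 'a \<Rightarrow> real) \<Rightarrow> bool" where
  "martingale_on Q F T A \<longleftrightarrow>
     (\<forall>t\<le>T. A t \<in> borel_measurable (F t) \<and> integrable Q (A t)) \<and>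
     (\<forall>s t. s \<le> t \<longrightarrow> t \<le> T \<longrightarrow> (AE \<omega> in Q. real_cond_exp Q (F s) (A t) \<omega> = A s \<omega>))"

text \<open>The G-conditional distribution of Y (given by a regular version, a kernel \<kappa>)
  has almost surely no point masses.\<close>
definition cond_distr_no_atoms :: "'a measure \<Rightarrow> 'a measure \<Rightarrow> ('a \<Rightarrow> real) \<Rightarrow> bool" where
  "cond_distr_no_atoms M G Y \<longleftrightarrow>
     (\<exists>\<kappa> :: 'a \<Rightarrow> real measure.
        (\<forall>\<omega>\<in>space M. prob_space (\<kappa> \<omega>) \<and> sets (\<kappa> \<omega>) = sets borel) \<and>
        (\<forall>B\<in>sets borel.
           (\<lambda>\<omega>. measure (\<kappa> \<omega>) B) \<in> borel_measurable G \<and>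
           (\<forall>D\<in>sets G. (LINT \<omega>:D|M. measure (\<kappa> \<omega>) B) = measure M (D \<inter> Y -` B \<inter> space M))) \<and>
        (AE \<omega> in M. \<forall>x. measure (\<kappa> \<omega>) {x} = 0))"

text \<open>Expected utility \<open>E(f)\<close> exists (is finite or +\<infinity>): f measurable, negative part integrable.\<close>
definition util_exists :: "'a measure \<Rightarrow> ('a \<Rightarrow> real) \<Rightarrow> bool" where
  "util_exists M f \<longleftrightarrow> f \<in> borel_measurable M \<and> (\<integral>\<^sup>+\<omega>. ennreal (- f \<omega>) \<partial>M) < \<infinity>"

text \<open>Extended-real value of \<open>E(f)\<close> (meaningful when util_exists holds).\<close>
definition util_val :: "'a measure \<Rightarrow> ('a \<Rightarrow> real) \<Rightarrow> ereal" where
  "util_val M f = enn2ereal (\<integral>\<^sup>+\<omega>. ennreal (f \<omega>) \<partial>M) - enn2ereal (\<integral>\<^sup>+\<omega>. ennreal (- f \<omega>) \<partial>M)"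

definition admissible :: "'a measure \<Rightarrow> (nat \<Rightarrow> 'a measure) \<Rightarrow> nat \<Rightarrow> (nat \<Rightarrow> 'a \<Rightarrow> real)
    \<Rightarrow> (nat \<Rightarrow> 'a \<Rightarrow> real) \<Rightarrow> (nat \<Rightarrow> 'a \<Rightarrow> real) \<Rightarrow> bool" where
  "admissible M F T E \<theta> \<xi> \<longleftrightarrow>
     (\<forall>t\<le>T. \<theta> t \<in> borel_measurable (F t)) \<and>
     (\<forall>t<T. \<xi> t \<in> borel_measurable (F t) \<and> (\<forall>\<omega>\<in>space M. 0 \<le> \<xi> t \<omega> \<and> \<xi> t \<omega> \<le> E t \<omega>))"

definition wealth :: "nat \<Rightarrow> real \<Rightarrow> (nat \<Rightarrow> 'a \<Rightarrow> real) \<Rightarrow> (nat \<Rightarrow> real \<Rightarrow> 'a \<Rightarrow> real)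
    \<Rightarrow> (nat \<Rightarrow> 'a \<Rightarrow> real) \<Rightarrow> ('a \<Rightarrow> real) \<Rightarrow> (nat \<Rightarrow> 'a \<Rightarrow> real) \<Rightarrow> (nat \<Rightarrow> 'a \<Rightarrow> real) \<Rightarrow> 'a \<Rightarrow> real" where
  "wealth T \<pi> A C E \<gamma> \<theta> \<xi> \<omega> =
     - (\<Sum>t<T. \<theta> t \<omega> * A t \<omega> + C t (\<xi> t \<omega>) \<omega>) - \<theta> T \<omega> * A T \<omega>
     - \<pi> * max 0 ((\<Sum>t<T. E t \<omega> - \<xi> t \<omega> - \<theta> t \<omega>) - \<gamma> \<omega> - \<theta> T \<omega>)"

definition abatement :: "(real \<Rightarrow> 'a \<Rightarrow> real) \<Rightarrow> ('a \<Rightarrow> real) \<Rightarrow> real \<Rightarrow> 'a \<Rightarrow> real" where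
  "abatement C E a \<omega> =
     (THE x. x \<in> {0..E \<omega>} \<and> (\<forall>y\<in>{0..E \<omega>}. C x \<omega> - a * x \<le> C y \<omega> - a * y))"

end

theory Submission
  imports Defs
begin

text \<open>Any deviation of an agent from its optimal policy whose gain is almost surely nonnegative must
  have zero gain almost surely, as the utilities are strictly increasing. Round trips in allowances
  between two dates therefore admit no arbitrage and, with trades at the final date, keep the price
  in \<open>[0, \<pi>]\<close>. For such a bounded price, weighting the up-moves of one period by the conditional mean
  of its down-moves and vice versa gives one-period densities whose product is the density of an
  equivalent martingale measure (a). Abating a different amount and trading the difference shows
  that the abatement minimizes \<open>C_t(x) - A_t x\<close> almost surely, first at the countably many rational
  candidates and then, by continuity, everywhere (b). At the final date every agent covers its
  emissions where \<open>A_T < \<pi>\<close> and sells surplus allowances where \<open>A_T > 0\<close>; with market clearing, the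
  sign of the aggregate excess emissions decides \<open>A_T\<close>, and this excess is almost surely nonzero
  because the aggregate allocation has an atomless conditional distribution (c).\<close>

section \<open>Abatement as a strictly convex minimization\<close>

lemma strict_convex_on_argmin_unique:
  fixes c :: "real \<Rightarrow> real"
  assumes sc: "strict_convex_on S c" and K: "convex K" "K \<subseteq> S"
    and x: "x \<in> K" and z: "z \<in> K"
    and min_x: "\<forall>y\<in>K. c x - a * x \<le> c y - a * y"
    and min_z: "\<forall>y\<in>K. c z - a * z \<le> c y - a * y"
  shows "x = z"
proof (rule ccontr)
  assume "x \<noteq> z"
  define m where "m = (1/2) * x + (1 - 1/2) * z"
  have "x \<in> S" "z \<in> S" "(1/2::real) > 0" "(1/2::real) < 1"
    using x z K(2) by auto
  then have "c m < (1/2) * c x + (1 - 1/2) * c z"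
    using sc \<open>x \<noteq> z\<close> unfolding strict_convex_on_def m_def by blast
  moreover have "m \<in> K"
    using convexD[OF K(1) x z, of "1/2" "1/2"] unfolding m_def by simp
  then have "c x - a * x \<le> c m - a * m" "c z - a * z \<le> c m - a * m"
    using min_x min_z by auto
  ultimately show False unfolding m_def by (simp add: algebra_simps)
qed

lemma abatement_eqI:
  fixes C :: "real \<Rightarrow> 'a \<Rightarrow> real"
  assumes sc: "strict_convex_on {0..} (\<lambda>x. C x \<omega>)"
    and z: "z \<in> {0..E \<omega>}"
    and min_z: "\<forall>y\<in>{0..E \<omega>}. C z \<omega> - a * z \<le> C y \<omega> - a * y"
  shows "abatement C E a \<omega> = z"
  unfolding abatement_def
proof (rule the_equality)
  fix x assume "x \<in> {0..E \<omega>} \<and> (\<forall>y\<in>{0..E \<omega>}. C x \<omega> - a * x \<le> C y \<omega> - a * y)"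
  then show "x = z"
    using strict_convex_on_argmin_unique[OF sc _ _ _ z _ min_z] by auto
qed (use z min_z in blast)

lemma closure_rational_multiples:
  fixes e :: real
  assumes "0 \<le> e"
  shows "closure ((\<lambda>r. r * e) ` {r \<in> \<rat>. 0 \<le> r \<and> r \<le> 1}) = {0..e}"
    (is "closure ?S = _")
proof
  have "?S \<subseteq> {0..e}"
    using assms by (auto intro: mult_left_le_one_le)
  then show "closure ?S \<subseteq> {0..e}"
    by (simp add: closure_minimal)
next
  show "{0..e} \<subseteq> closure ?S"
  proof (cases "e = 0")
    case True
    then have "0 \<in> ?S" by (auto intro!: image_eqI[of _ _ 0])
    then show ?thesis using True closure_subset by fastforce
  next
    case False
    with assms have e: "0 < e" by simp
    show ?thesis
    proof
      fix y assume y: "y \<in> {0..e}"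
      then have y01: "0 \<le> y / e" "y / e \<le> 1"
        using e by auto
      show "y \<in> closure ?S"
        unfolding closure_approachable
      proof (intro allI impI)
        fix \<epsilon> :: real assume "0 < \<epsilon>"
        obtain q where q: "q \<in> \<rat>" "\<bar>q - y / e\<bar> < \<epsilon> / e"
          using rational_approximation[of "\<epsilon> / e" "y / e"] \<open>0 < \<epsilon>\<close> e by auto
        define r where "r = max 0 (min 1 q)"
        have "\<bar>r - y / e\<bar> < \<epsilon> / e"
          using q(2) y01 by (auto simp: r_def max_def min_def)
        then have "e * \<bar>r - y / e\<bar> < \<epsilon>"
          using e by (simp add: field_simps)
        moreover have "r * e - y = e * (r - y / e)"
          using e by (simp add: field_simps)
        ultimately have "dist (r * e) y < \<epsilon>"
          using e by (simp add: dist_real_def abs_mult)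
        moreover have "r \<in> \<rat>"
          using q(1) by (simp add: r_def max_def min_def)
        ultimately show "\<exists>x\<in>?S. dist x y < \<epsilon>"
          by (auto simp: r_def)
      qed
    qed
  qed
qed

lemma ge_on_interval_if_ge_on_rational_points:
  fixes f :: "real \<Rightarrow> real"
  assumes "continuous_on {0..e} f" "0 \<le> e"
    and "\<And>r. r \<in> \<rat> \<Longrightarrow> 0 \<le> r \<Longrightarrow> r \<le> 1 \<Longrightarrow> m \<le> f (r * e)"
    and "y \<in> {0..e}"
  shows "m \<le> f y"
  using continuous_ge_on_closure[of "(\<lambda>r. r * e) ` {r \<in> \<rat>. 0 \<le> r \<and> r \<le> 1}" f y m] assms
  by (auto simp: closure_rational_multiples)

section \<open>Atomless conditional distributions\<close>

definition regular_cond_distr :: "'a measure \<Rightarrow> 'a measure \<Rightarrow> ('a \<Rightarrow> real) \<Rightarrow> ('a \<Rightarrow> real measure) \<Rightarrow> bool" where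
  "regular_cond_distr M G Y \<kappa> \<longleftrightarrow>
     (\<forall>\<omega>\<in>space M. prob_space (\<kappa> \<omega>) \<and> sets (\<kappa> \<omega>) = sets borel) \<and>
     (\<forall>B\<in>sets borel.
        (\<lambda>\<omega>. measure (\<kappa> \<omega>) B) \<in> borel_measurable G \<and>
        (\<forall>D\<in>sets G. (LINT \<omega>:D|M. measure (\<kappa> \<omega>) B) = measure M (D \<inter> Y -` B \<inter> space M)))"

lemma cond_distr_no_atoms_iff:
  "cond_distr_no_atoms M G Y \<longleftrightarrow>
     (\<exists>\<kappa>. regular_cond_distr M G Y \<kappa> \<and> (AE \<omega> in M. \<forall>x. measure (\<kappa> \<omega>) {x} = 0))"
  unfolding cond_distr_no_atoms_def regular_cond_distr_def by blast

lemma regular_cond_distr_emeasure: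
  assumes P: "prob_space M" and sub: "subalgebra M G" and \<kappa>: "regular_cond_distr M G Y \<kappa>"
    and B: "B \<in> sets borel" and D: "D \<in> sets G"
  shows "emeasure M (D \<inter> Y -` B \<inter> space M) = (\<integral>\<^sup>+\<omega>. ennreal (indicator D \<omega> * measure (\<kappa> \<omega>) B) \<partial>M)"
proof -
  interpret prob_space M by (rule P)
  have \<kappa>_prob: "\<And>\<omega>. \<omega> \<in> space M \<Longrightarrow> prob_space (\<kappa> \<omega>)"
    and \<kappa>_meas: "(\<lambda>\<omega>. measure (\<kappa> \<omega>) B) \<in> borel_measurable M"
    and \<kappa>_int: "(LINT \<omega>:D|M. measure (\<kappa> \<omega>) B) = measure M (D \<inter> Y -` B \<inter> space M)"
    using \<kappa> B D measurable_from_subalg[OF sub] unfolding regular_cond_distr_def by blast+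
  have [measurable]: "D \<in> sets M"
    using D sub unfolding subalgebra_def by auto
  have bounded: "AE \<omega> in M. 0 \<le> indicator D \<omega> * measure (\<kappa> \<omega>) B \<and> indicator D \<omega> * measure (\<kappa> \<omega>) B \<le> 1"
    using \<kappa>_prob by (intro AE_I2) (auto simp: indicator_def prob_space.prob_le_1)
  have int: "integrable M (\<lambda>\<omega>. indicator D \<omega> * measure (\<kappa> \<omega>) B)"
    by (rule integrable_const_bound[where B=1]) (use bounded \<kappa>_meas in auto)
  have "emeasure M (D \<inter> Y -` B \<inter> space M) = ennreal (LINT \<omega>:D|M. measure (\<kappa> \<omega>) B)"
    using \<kappa>_int by (simp add: emeasure_eq_measure)
  also have "\<dots> = (\<integral>\<^sup>+\<omega>. ennreal (indicator D \<omega> * measure (\<kappa> \<omega>) B) \<partial>M)"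
    unfolding set_lebesgue_integral_def by (simp add: nn_integral_eq_integral[OF int] bounded)
  finally show ?thesis .
qed

lemma regular_cond_distr_emeasure_random_index:
  fixes h :: "'a \<Rightarrow> 'b::countable" and J :: "'b \<Rightarrow> real set"
  assumes P: "prob_space M" and sub: "subalgebra M G" and \<kappa>: "regular_cond_distr M G Y \<kappa>"
    and Y[measurable]: "Y \<in> borel_measurable M"
    and h: "h \<in> measurable G (count_space UNIV)" and J: "\<And>k. J k \<in> sets borel"
  shows "emeasure M {\<omega>\<in>space M. Y \<omega> \<in> J (h \<omega>)} = (\<integral>\<^sup>+\<omega>. ennreal (measure (\<kappa> \<omega>) (J (h \<omega>))) \<partial>M)"
proof -
  have \<kappa>_meas: "\<And>k. (\<lambda>\<omega>. measure (\<kappa> \<omega>) (J k)) \<in> borel_measurable M"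
    using \<kappa> J measurable_from_subalg[OF sub] unfolding regular_cond_distr_def by blast
  define D where "D k = {\<omega>\<in>space M. h \<omega> = k}" for k
  have DG: "D k \<in> sets G" for k
  proof -
    have "D k = h -` {k} \<inter> space G"
      using sub unfolding D_def subalgebra_def by auto
    then show ?thesis using measurable_sets[OF h, of "{k}"] by simp
  qed
  have DM[measurable]: "D k \<in> sets M" for k
    using DG sub unfolding subalgebra_def by auto
  have slice: "D k \<inter> Y -` J k \<inter> space M \<in> sets M" for k
    using J by measurable
  have "{\<omega>\<in>space M. Y \<omega> \<in> J (h \<omega>)} = (\<Union>k. D k \<inter> Y -` J k \<inter> space M)"
    unfolding D_def by auto
  also have "emeasure M \<dots> = (\<integral>\<^sup>+k. emeasure M (D k \<inter> Y -` J k \<inter> space M) \<partial>count_space UNIV)"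
    by (rule emeasure_UN_countable[OF slice]) (auto simp: disjoint_family_on_def D_def)
  also have "\<dots> = (\<integral>\<^sup>+k. \<integral>\<^sup>+\<omega>. ennreal (indicator (D k) \<omega> * measure (\<kappa> \<omega>) (J k)) \<partial>M \<partial>count_space UNIV)"
    by (intro nn_integral_cong regular_cond_distr_emeasure[OF P sub \<kappa> J DG])
  also have "\<dots> = (\<integral>\<^sup>+\<omega>. \<integral>\<^sup>+k. ennreal (indicator (D k) \<omega> * measure (\<kappa> \<omega>) (J k)) \<partial>count_space UNIV \<partial>M)"
    by (rule nn_integral_count_space_nn_integral[symmetric]) (use \<kappa>_meas in auto)
  also have "\<dots> = (\<integral>\<^sup>+\<omega>. ennreal (measure (\<kappa> \<omega>) (J (h \<omega>))) \<partial>M)"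
  proof (rule nn_integral_cong)
    fix \<omega> assume "\<omega> \<in> space M"
    then have "(\<integral>\<^sup>+k. ennreal (indicator (D k) \<omega> * measure (\<kappa> \<omega>) (J k)) \<partial>count_space UNIV)
        = (\<integral>\<^sup>+k. ennreal (measure (\<kappa> \<omega>) (J k)) * indicator {h \<omega>} k \<partial>count_space UNIV)"
      by (intro nn_integral_cong) (auto simp: D_def indicator_def)
    then show "(\<integral>\<^sup>+k. ennreal (indicator (D k) \<omega> * measure (\<kappa> \<omega>) (J k)) \<partial>count_space UNIV)
        = ennreal (measure (\<kappa> \<omega>) (J (h \<omega>)))"
      by simp
  qed
  finally show ?thesis .
qed

definition dyadic_cell :: "nat \<Rightarrow> real \<Rightarrow> real set" where
  "dyadic_cell m x = {of_int \<lfloor>x * 2^m\<rfloor> / 2^m ..< (of_int \<lfloor>x * 2^m\<rfloor> + 1) / 2^m}"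

lemma mem_dyadic_cell: "x \<in> dyadic_cell m x"
  using of_int_floor_le[of "x * 2^m"] real_of_int_floor_add_one_gt[of "x * 2^m"]
  by (auto simp: dyadic_cell_def divide_simps)

lemma dyadic_cell_subset: "dyadic_cell m x \<subseteq> {x - (1/2)^m .. x + (1/2)^m}"
proof
  fix y assume "y \<in> dyadic_cell m x"
  then have "of_int \<lfloor>x * 2^m\<rfloor> \<le> y * 2^m" "y * 2^m < of_int \<lfloor>x * 2^m\<rfloor> + 1"
    by (simp_all add: dyadic_cell_def divide_simps)
  then have "x * 2^m - 1 \<le> y * 2^m" "y * 2^m \<le> x * 2^m + 1"
    using of_int_floor_le[of "x * 2^m"] real_of_int_floor_add_one_gt[of "x * 2^m"] by linarith+
  then have "(x - (1/2)^m) * 2^m \<le> y * 2^m" "y * 2^m \<le> (x + (1/2)^m) * 2^m"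
    by (simp_all add: algebra_simps power_one_over)
  then show "y \<in> {x - (1/2)^m .. x + (1/2)^m}"
    by simp
qed

lemma measure_dyadic_cell_tendsto:
  assumes "prob_space K" and sets_K: "sets K = sets borel"
  shows "(\<lambda>m. measure K (dyadic_cell m x)) \<longlonglongrightarrow> measure K {x}"
proof -
  interpret prob_space K by fact
  define N where "N m = {x - (1/2)^m .. x + (1/2)^m}" for m :: nat
  have N_dec: "decseq N"
    unfolding N_def decseq_def by (auto intro: order_trans[OF _ power_decreasing] simp: diff_le_eq)
  have N_sets: "range N \<subseteq> sets K"
    by (auto simp: N_def sets_K)
  have N_Inter: "(\<Inter>m. N m) = {x}"
  proof (intro set_eqI iffI)
    fix z assume z: "z \<in> (\<Inter>m. N m)"
    show "z \<in> {x}"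
    proof (rule ccontr)
      assume "z \<notin> {x}"
      then obtain m where "(1/2::real)^m < \<bar>z - x\<bar>"
        using real_arch_pow_inv[of "\<bar>z - x\<bar>" "1/2"] by auto
      moreover have "z \<in> N m" using z by auto
      ultimately show False unfolding N_def by auto
    qed
  qed (auto simp: N_def)
  have lim: "(\<lambda>m. measure K (N m)) \<longlonglongrightarrow> measure K {x}"
    using finite_Lim_measure_decseq[OF N_sets N_dec] unfolding N_Inter .
  have lower: "measure K {x} \<le> measure K (dyadic_cell m x)" for m
    using mem_dyadic_cell[of x m]
    by (intro finite_measure_mono) (auto simp: sets_K dyadic_cell_def)
  have upper: "measure K (dyadic_cell m x) \<le> measure K (N m)" for m
    using dyadic_cell_subset[of m x] unfolding N_def[symmetric]
    by (intro finite_measure_mono) (auto simp: sets_K N_def)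
  show ?thesis
    by (rule real_tendsto_sandwich[OF always_eventually always_eventually tendsto_const lim])
      (use lower upper in blast)+
qed

lemma nn_integral_measure_dyadic_cell_tendsto_0:
  assumes P: "prob_space M"
    and \<kappa>_prob: "\<And>\<omega>. \<omega> \<in> space M \<Longrightarrow> prob_space (\<kappa> \<omega>) \<and> sets (\<kappa> \<omega>) = sets borel"
    and \<kappa>_meas: "\<And>B. B \<in> sets borel \<Longrightarrow> (\<lambda>\<omega>. measure (\<kappa> \<omega>) B) \<in> borel_measurable M"
    and atomless: "AE \<omega> in M. \<forall>x. measure (\<kappa> \<omega>) {x} = 0"
    and X[measurable]: "X \<in> borel_measurable M"
  shows "(\<lambda>m. \<integral>\<^sup>+\<omega>. ennreal (measure (\<kappa> \<omega>) (dyadic_cell m (X \<omega>))) \<partial>M) \<longlonglongrightarrow> 0"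
proof -
  interpret prob_space M by (rule P)
  define cell where "cell m \<omega> = measure (\<kappa> \<omega>) (dyadic_cell m (X \<omega>))" for m \<omega>
  have conv: "AE \<omega> in M. (\<lambda>m. ennreal (cell m \<omega>)) \<longlonglongrightarrow> ennreal 0"
    using atomless AE_space
  proof eventually_elim
    case (elim \<omega>)
    then have "(\<lambda>m. cell m \<omega>) \<longlonglongrightarrow> 0"
      using measure_dyadic_cell_tendsto[of "\<kappa> \<omega>" "X \<omega>"] \<kappa>_prob unfolding cell_def by auto
    then show ?case by (rule tendsto_ennrealI)
  qed
  have cell_meas: "cell m \<in> borel_measurable M" for m
  proof -
    define idx where "idx \<omega> = \<lfloor>X \<omega> * 2^m\<rfloor>" for \<omega>
    have "idx \<in> measurable M (count_space UNIV)"
      unfolding idx_def by measurable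
    then show ?thesis
      unfolding cell_def dyadic_cell_def idx_def[symmetric]
      by (rule measurable_compose_countable[rotated]) (rule \<kappa>_meas, simp)
  qed
  have cell_le_1: "AE \<omega> in M. ennreal (cell m \<omega>) \<le> 1" for m
    using \<kappa>_prob by (intro AE_I2) (auto simp: cell_def prob_space.prob_le_1)
  have "(\<lambda>m. \<integral>\<^sup>+\<omega>. ennreal (cell m \<omega>) \<partial>M) \<longlonglongrightarrow> (\<integral>\<^sup>+\<omega>. ennreal 0 \<partial>M)"
    by (rule nn_integral_dominated_convergence[OF _ _ _ cell_le_1 _ conv])
      (use cell_meas in \<open>auto simp: emeasure_space_1\<close>)
  then show ?thesis
    by (simp add: cell_def)
qed

text \<open>The event \<open>Y = X\<close> is covered by \<open>Y\<close> lying in the dyadic cell of \<open>X\<close>, whose probability is the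
  integral of the conditional mass of that cell; this mass vanishes in the limit for atomless
  conditional distributions.\<close>

lemma cond_distr_no_atoms_AE_neq:
  assumes P: "prob_space M" and sub: "subalgebra M G" and no_atoms: "cond_distr_no_atoms M G Y"
    and Y[measurable]: "Y \<in> borel_measurable M" and XG: "X \<in> borel_measurable G"
  shows "AE \<omega> in M. Y \<omega> \<noteq> X \<omega>"
proof -
  obtain \<kappa> where \<kappa>: "regular_cond_distr M G Y \<kappa>" and atomless: "AE \<omega> in M. \<forall>x. measure (\<kappa> \<omega>) {x} = 0"
    using no_atoms unfolding cond_distr_no_atoms_iff by blast
  have X[measurable]: "X \<in> borel_measurable M"
    using measurable_from_subalg[OF sub XG] .
  define S where "S = {\<omega>\<in>space M. Y \<omega> = X \<omega>}"
  have S: "S \<in> sets M" unfolding S_def by measurable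
  have bound: "emeasure M S \<le> (\<integral>\<^sup>+\<omega>. ennreal (measure (\<kappa> \<omega>) (dyadic_cell m (X \<omega>))) \<partial>M)" for m
  proof -
    let ?J = "\<lambda>k::int. {of_int k / 2^m ..< (of_int k + 1) / 2^m :: real}"
    have idx: "(\<lambda>\<omega>. \<lfloor>X \<omega> * 2^m\<rfloor>) \<in> measurable G (count_space UNIV)"
      using XG by measurable
    have "S \<subseteq> {\<omega>\<in>space M. Y \<omega> \<in> ?J \<lfloor>X \<omega> * 2^m\<rfloor>}"
      using mem_dyadic_cell unfolding S_def dyadic_cell_def by fastforce
    then have "emeasure M S \<le> emeasure M {\<omega>\<in>space M. Y \<omega> \<in> ?J \<lfloor>X \<omega> * 2^m\<rfloor>}"
      by (intro emeasure_mono) measurable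
    also have "\<dots> = (\<integral>\<^sup>+\<omega>. ennreal (measure (\<kappa> \<omega>) (dyadic_cell m (X \<omega>))) \<partial>M)"
      unfolding dyadic_cell_def
      by (rule regular_cond_distr_emeasure_random_index[OF P sub \<kappa> Y idx]) simp
    finally show ?thesis .
  qed
  have "(\<lambda>m. \<integral>\<^sup>+\<omega>. ennreal (measure (\<kappa> \<omega>) (dyadic_cell m (X \<omega>))) \<partial>M) \<longlonglongrightarrow> 0"
    using \<kappa> measurable_from_subalg[OF sub] unfolding regular_cond_distr_def
    by (intro nn_integral_measure_dyadic_cell_tendsto_0[OF P _ _ atomless X]) blast+
  then have "emeasure M S \<le> 0"
    by (rule tendsto_lowerbound) (use bound in auto)
  then show ?thesis
    using AE_iff_measurable[OF S, of "\<lambda>\<omega>. Y \<omega> \<noteq> X \<omega>"] unfolding S_def by auto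
qed

section \<open>Equivalent martingale measures in discrete time\<close>

context sigma_finite_subalgebra
begin

lemma nn_integral_mult_real_cond_exp:
  assumes W[measurable]: "W \<in> borel_measurable M" and W_int: "integrable M W"
    and W_nonneg: "AE \<omega> in M. 0 \<le> W \<omega>" and g[measurable]: "g \<in> borel_measurable F"
  shows "(\<integral>\<^sup>+\<omega>. g \<omega> * ennreal (W \<omega>) \<partial>M) = (\<integral>\<^sup>+\<omega>. g \<omega> * ennreal (real_cond_exp M F W \<omega>) \<partial>M)"
proof -
  have neg_part: "AE \<omega> in M. nn_cond_exp M F (\<lambda>\<omega>. ennreal (- W \<omega>)) \<omega> = 0"
  proof -
    have "AE \<omega> in M. nn_cond_exp M F (\<lambda>\<omega>. ennreal (- W \<omega>)) \<omega> = nn_cond_exp M F (\<lambda>\<omega>. 0) \<omega>"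
      by (rule nn_cond_exp_cong) (use W_nonneg in \<open>auto simp: ennreal_neg\<close>)
    moreover have "AE \<omega> in M. 0 = nn_cond_exp M F (\<lambda>\<omega>. 0) \<omega>"
      by (rule nn_cond_exp_F_meas) simp
    ultimately show ?thesis by eventually_elim simp
  qed
  have "(\<integral>\<^sup>+\<omega>. nn_cond_exp M F (\<lambda>\<omega>. ennreal (W \<omega>)) \<omega> \<partial>M) = (\<integral>\<^sup>+\<omega>. 1 * nn_cond_exp M F (\<lambda>\<omega>. ennreal (W \<omega>)) \<omega> \<partial>M)"
    by simp
  also have "\<dots> = (\<integral>\<^sup>+\<omega>. 1 * ennreal (W \<omega>) \<partial>M)"
    by (rule nn_cond_exp_intg) auto
  also have "\<dots> \<noteq> \<infinity>"
    using integrableD(2)[OF W_int] by simp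
  finally have "AE \<omega> in M. nn_cond_exp M F (\<lambda>\<omega>. ennreal (W \<omega>)) \<omega> \<noteq> \<infinity>"
    by (intro nn_integral_PInf_AE) auto
  with neg_part have "AE \<omega> in M. nn_cond_exp M F (\<lambda>\<omega>. ennreal (W \<omega>)) \<omega> = ennreal (real_cond_exp M F W \<omega>)"
    by eventually_elim (simp add: real_cond_exp_def ennreal_enn2real_if)
  then have "(\<integral>\<^sup>+\<omega>. g \<omega> * nn_cond_exp M F (\<lambda>\<omega>. ennreal (W \<omega>)) \<omega> \<partial>M)
      = (\<integral>\<^sup>+\<omega>. g \<omega> * ennreal (real_cond_exp M F W \<omega>) \<partial>M)"
    by (intro nn_integral_cong_AE) (auto elim: eventually_mono)
  moreover have "(\<integral>\<^sup>+\<omega>. g \<omega> * ennreal (W \<omega>) \<partial>M) = (\<integral>\<^sup>+\<omega>. g \<omega> * nn_cond_exp M F (\<lambda>\<omega>. ennreal (W \<omega>)) \<omega> \<partial>M)"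
    by (rule nn_cond_exp_intg[symmetric]) auto
  ultimately show ?thesis by simp
qed

lemma real_cond_exp_nonpos_imp_AE_zero:
  assumes X[measurable]: "X \<in> borel_measurable M" and X_int: "integrable M X"
    and X_nonneg: "\<And>\<omega>. \<omega> \<in> space M \<Longrightarrow> 0 \<le> X \<omega>"
    and B: "B \<in> sets F" and nonpos: "AE \<omega> in M. \<omega> \<in> B \<longrightarrow> real_cond_exp M F X \<omega> \<le> 0"
  shows "AE \<omega> in M. \<omega> \<in> B \<longrightarrow> X \<omega> = 0"
proof -
  have BM[measurable]: "B \<in> sets M"
    using B subalg unfolding subalgebra_def by auto
  have B_int: "integrable M (\<lambda>\<omega>. indicator B \<omega> * X \<omega>)"
    using integrable_mult_indicator[OF BM X_int] by simp
  have "(\<integral>\<omega>. indicator B \<omega> * X \<omega> \<partial>M) = (\<integral>\<omega>. indicator B \<omega> * real_cond_exp M F X \<omega> \<partial>M)"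
    by (rule real_cond_exp_intg(2)[symmetric]) (use B_int B in auto)
  also have "\<dots> \<le> (\<integral>\<omega>. 0 \<partial>M)"
  proof (rule integral_mono_AE)
    show "integrable M (\<lambda>\<omega>. indicator B \<omega> * real_cond_exp M F X \<omega>)"
      by (rule real_cond_exp_intg(1)) (use B_int B in auto)
    show "AE \<omega> in M. indicator B \<omega> * real_cond_exp M F X \<omega> \<le> 0"
      using nonpos by eventually_elim (auto simp: indicator_def)
  qed simp
  finally have "(\<integral>\<omega>. indicator B \<omega> * X \<omega> \<partial>M) \<le> 0" by simp
  moreover have "AE \<omega> in M. 0 \<le> indicator B \<omega> * X \<omega>"
    using X_nonneg by (intro AE_I2) auto
  moreover have "0 \<le> (\<integral>\<omega>. indicator B \<omega> * X \<omega> \<partial>M)"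
    using X_nonneg by (intro integral_nonneg_AE AE_I2) auto
  ultimately have "AE \<omega> in M. indicator B \<omega> * X \<omega> = 0"
    using integral_nonneg_eq_0_iff_AE[OF B_int] by simp
  then show ?thesis
    by eventually_elim (auto simp: indicator_def)
qed

end

lemma (in finite_measure_subalgebra) real_cond_exp_bounded:
  assumes [measurable]: "X \<in> borel_measurable M"
    and bounds: "\<And>\<omega>. \<omega> \<in> space M \<Longrightarrow> 0 \<le> X \<omega> \<and> X \<omega> \<le> K"
  shows "AE \<omega> in M. 0 \<le> real_cond_exp M F X \<omega> \<and> real_cond_exp M F X \<omega> \<le> K"
proof -
  have X_int: "integrable M X"
    by (rule integrable_const_bound[where B=K]) (use bounds in auto)
  have "AE \<omega> in M. 0 \<le> real_cond_exp M F X \<omega>"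
    by (rule real_cond_exp_pos) (use bounds in auto)
  moreover have "AE \<omega> in M. real_cond_exp M F X \<omega> \<le> real_cond_exp M F (\<lambda>\<omega>. K) \<omega>"
    by (rule real_cond_exp_mono[OF _ X_int]) (use bounds in auto)
  moreover have "AE \<omega> in M. real_cond_exp M F (\<lambda>\<omega>. K) \<omega> = K"
    by (rule real_cond_exp_F_meas) auto
  ultimately show ?thesis by eventually_elim auto
qed

lemma (in sigma_finite_subalgebra) real_cond_exp_pos_if_no_arbitrage:
  fixes Y0 Y1 :: "'a \<Rightarrow> real"
  assumes Y0[measurable]: "Y0 \<in> borel_measurable F" and Y1[measurable]: "Y1 \<in> borel_measurable M"
    and loss_int: "integrable M (\<lambda>\<omega>. max 0 (Y0 \<omega> - Y1 \<omega>))"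
    and no_arbitrage: "\<And>B. B \<in> sets F \<Longrightarrow> (AE \<omega> in M. \<omega> \<in> B \<longrightarrow> Y0 \<omega> \<le> Y1 \<omega>) \<Longrightarrow>
      (AE \<omega> in M. \<omega> \<in> B \<longrightarrow> Y1 \<omega> = Y0 \<omega>)"
  shows "AE \<omega> in M. Y0 \<omega> < Y1 \<omega> \<longrightarrow> 0 < real_cond_exp M F (\<lambda>\<omega>. max 0 (Y0 \<omega> - Y1 \<omega>)) \<omega>"
proof -
  have space_F: "space F = space M"
    using subalg unfolding subalgebra_def by simp
  have [measurable]: "Y0 \<in> borel_measurable M"
    using measurable_from_subalg[OF subalg Y0] .
  define B where "B = {\<omega>\<in>space M. real_cond_exp M F (\<lambda>\<omega>. max 0 (Y0 \<omega> - Y1 \<omega>)) \<omega> \<le> 0}"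
  have B: "B \<in> sets F"
    unfolding B_def by (subst space_F[symmetric]) measurable
  have "AE \<omega> in M. \<omega> \<in> B \<longrightarrow> max 0 (Y0 \<omega> - Y1 \<omega>) = 0"
    by (rule real_cond_exp_nonpos_imp_AE_zero[OF _ loss_int _ B]) (auto simp: B_def)
  then have "AE \<omega> in M. \<omega> \<in> B \<longrightarrow> Y0 \<omega> \<le> Y1 \<omega>"
    by eventually_elim auto
  from no_arbitrage[OF B this] AE_space show ?thesis
    by eventually_elim (auto simp: B_def)
qed

text \<open>Up-moves of \<open>Y1 - Y0\<close> are weighted by the conditional mean size of the down-moves and vice
  versa, so that the weighted increment has conditional mean zero.\<close>

lemma (in finite_measure_subalgebra) real_cond_exp_cross_weighted:
  fixes Y0 Y1 p q :: "'a \<Rightarrow> real"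
  assumes Y0[measurable]: "Y0 \<in> borel_measurable F" and Y1[measurable]: "Y1 \<in> borel_measurable M"
    and Y0_bounds: "\<And>\<omega>. \<omega> \<in> space M \<Longrightarrow> 0 \<le> Y0 \<omega> \<and> Y0 \<omega> \<le> K"
    and Y1_bounds: "\<And>\<omega>. \<omega> \<in> space M \<Longrightarrow> 0 \<le> Y1 \<omega> \<and> Y1 \<omega> \<le> K"
    and pq[measurable]: "p \<in> borel_measurable F" "q \<in> borel_measurable F"
    and pq_bounds: "\<And>\<omega>. 0 \<le> p \<omega> \<and> p \<omega> \<le> K" "\<And>\<omega>. 0 \<le> q \<omega> \<and> q \<omega> \<le> K"
    and p_eq: "AE \<omega> in M. p \<omega> = real_cond_exp M F (\<lambda>\<omega>. max 0 (Y1 \<omega> - Y0 \<omega>)) \<omega>"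
    and q_eq: "AE \<omega> in M. q \<omega> = real_cond_exp M F (\<lambda>\<omega>. max 0 (Y0 \<omega> - Y1 \<omega>)) \<omega>"
  defines "Z \<equiv> \<lambda>\<omega>. if Y0 \<omega> < Y1 \<omega> then q \<omega> else if Y1 \<omega> < Y0 \<omega> then p \<omega> else 1"
  shows "AE \<omega> in M. real_cond_exp M F (\<lambda>\<omega>. Z \<omega> * Y1 \<omega>) \<omega> = real_cond_exp M F Z \<omega> * Y0 \<omega>"
proof -
  have K: "0 \<le> K"
    using pq_bounds(1) by (meson order_trans)
  have [measurable]: "Y0 \<in> borel_measurable M" "p \<in> borel_measurable M" "q \<in> borel_measurable M"
    using measurable_from_subalg[OF subalg Y0] measurable_from_subalg[OF subalg pq(1)]
      measurable_from_subalg[OF subalg pq(2)] by auto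
  have bounded_int: "integrable M f" if "f \<in> borel_measurable M" "\<And>\<omega>. \<omega> \<in> space M \<Longrightarrow> \<bar>f \<omega>\<bar> \<le> B"
    for f :: "'a \<Rightarrow> real" and B
    by (rule integrable_const_bound[where B=B]) (use that in auto)
  define up where "up \<omega> = max 0 (Y1 \<omega> - Y0 \<omega>)" for \<omega>
  define down where "down \<omega> = max 0 (Y0 \<omega> - Y1 \<omega>)" for \<omega>
  have [measurable]: "up \<in> borel_measurable M" "down \<in> borel_measurable M" "Z \<in> borel_measurable M"
    unfolding up_def down_def Z_def by measurable
  have up_down_bounds: "0 \<le> up \<omega> \<and> up \<omega> \<le> K" "0 \<le> down \<omega> \<and> down \<omega> \<le> K" if "\<omega> \<in> space M" for \<omega>
    using Y0_bounds[OF that] Y1_bounds[OF that] unfolding up_def down_def by auto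
  have Z_bounds: "0 \<le> Z \<omega> \<and> Z \<omega> \<le> max 1 K" for \<omega>
    unfolding Z_def using pq_bounds[of \<omega>] by (auto simp: le_max_iff_disj)
  have Y0Z_int: "integrable M (\<lambda>\<omega>. Y0 \<omega> * Z \<omega>)"
    by (rule bounded_int[of _ "K * max 1 K"])
      (use Y0_bounds Z_bounds K in \<open>auto simp: abs_mult intro!: mult_mono\<close>)
  have weighted_int: "integrable M (\<lambda>\<omega>. q \<omega> * up \<omega>)" "integrable M (\<lambda>\<omega>. p \<omega> * down \<omega>)"
    by (rule bounded_int[of _ "K * K"], simp, use pq_bounds up_down_bounds K in \<open>auto simp: abs_mult intro!: mult_mono\<close>)+
  have decomp: "(\<lambda>\<omega>. Z \<omega> * Y1 \<omega>) = (\<lambda>\<omega>. Y0 \<omega> * Z \<omega> + (q \<omega> * up \<omega> - p \<omega> * down \<omega>))"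
    unfolding Z_def up_def down_def by (auto simp: algebra_simps)
  have "AE \<omega> in M. real_cond_exp M F (\<lambda>\<omega>. Z \<omega> * Y1 \<omega>) \<omega>
      = real_cond_exp M F (\<lambda>\<omega>. Y0 \<omega> * Z \<omega>) \<omega>
        + (real_cond_exp M F (\<lambda>\<omega>. q \<omega> * up \<omega>) \<omega> - real_cond_exp M F (\<lambda>\<omega>. p \<omega> * down \<omega>) \<omega>)"
    using real_cond_exp_add[OF Y0Z_int Bochner_Integration.integrable_diff[OF weighted_int]]
      real_cond_exp_diff[OF weighted_int]
    unfolding decomp by eventually_elim simp
  moreover have "AE \<omega> in M. real_cond_exp M F (\<lambda>\<omega>. Y0 \<omega> * Z \<omega>) \<omega> = Y0 \<omega> * real_cond_exp M F Z \<omega>"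
    by (rule real_cond_exp_mult) (auto simp: Y0Z_int)
  moreover have "AE \<omega> in M. real_cond_exp M F (\<lambda>\<omega>. q \<omega> * up \<omega>) \<omega> = q \<omega> * p \<omega>"
    using real_cond_exp_mult[of q up] weighted_int p_eq unfolding up_def by (auto elim: eventually_elim2)
  moreover have "AE \<omega> in M. real_cond_exp M F (\<lambda>\<omega>. p \<omega> * down \<omega>) \<omega> = p \<omega> * q \<omega>"
    using real_cond_exp_mult[of p down] weighted_int q_eq unfolding down_def by (auto elim: eventually_elim2)
  ultimately show ?thesis
    by eventually_elim (simp add: algebra_simps)
qed

lemma one_period_positive_weight:
  fixes Y0 Y1 :: "'a \<Rightarrow> real"
  assumes P: "prob_space M" and subG: "subalgebra M G" and subH: "subalgebra M H" and GH: "sets G \<subseteq> sets H"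
    and Y0[measurable]: "Y0 \<in> borel_measurable G" and Y1[measurable]: "Y1 \<in> borel_measurable H"
    and Y0_bounds: "\<And>\<omega>. \<omega> \<in> space M \<Longrightarrow> 0 \<le> Y0 \<omega> \<and> Y0 \<omega> \<le> K"
    and Y1_bounds: "\<And>\<omega>. \<omega> \<in> space M \<Longrightarrow> 0 \<le> Y1 \<omega> \<and> Y1 \<omega> \<le> K"
    and no_up: "\<And>B. B \<in> sets G \<Longrightarrow> (AE \<omega> in M. \<omega> \<in> B \<longrightarrow> Y0 \<omega> \<le> Y1 \<omega>) \<Longrightarrow> (AE \<omega> in M. \<omega> \<in> B \<longrightarrow> Y1 \<omega> = Y0 \<omega>)"
    and no_down: "\<And>B. B \<in> sets G \<Longrightarrow> (AE \<omega> in M. \<omega> \<in> B \<longrightarrow> Y1 \<omega> \<le> Y0 \<omega>) \<Longrightarrow> (AE \<omega> in M. \<omega> \<in> B \<longrightarrow> Y1 \<omega> = Y0 \<omega>)"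
  shows "\<exists>Z. Z \<in> borel_measurable H \<and> (\<forall>\<omega>. 0 \<le> Z \<omega> \<and> Z \<omega> \<le> max 1 K) \<and> (AE \<omega> in M. 0 < Z \<omega>) \<and>
     (AE \<omega> in M. real_cond_exp M G (\<lambda>\<omega>. Z \<omega> * Y1 \<omega>) \<omega> = real_cond_exp M G Z \<omega> * Y0 \<omega>)"
proof -
  interpret prob_space M by (rule P)
  interpret finite_measure_subalgebra M G by unfold_locales (rule subG)
  have K: "0 \<le> K"
    using Y0_bounds not_empty by force
  have HG: "subalgebra H G"
    using subG subH GH unfolding subalgebra_def by auto
  have [measurable]: "Y0 \<in> borel_measurable H" "Y0 \<in> borel_measurable M" "Y1 \<in> borel_measurable M"
    using measurable_from_subalg[OF HG Y0] measurable_from_subalg[OF subG Y0]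
      measurable_from_subalg[OF subH Y1] by auto
  have bounded_int: "integrable M f" if "f \<in> borel_measurable M" "\<And>\<omega>. \<omega> \<in> space M \<Longrightarrow> 0 \<le> f \<omega> \<and> f \<omega> \<le> K"
    for f :: "'a \<Rightarrow> real"
    by (rule integrable_const_bound[where B=K]) (use that in auto)
  define up where "up \<omega> = max 0 (Y1 \<omega> - Y0 \<omega>)" for \<omega>
  define down where "down \<omega> = max 0 (Y0 \<omega> - Y1 \<omega>)" for \<omega>
  have [measurable]: "up \<in> borel_measurable M" "down \<in> borel_measurable M"
    unfolding up_def down_def by measurable
  have up_down_bounds: "0 \<le> up \<omega> \<and> up \<omega> \<le> K" "0 \<le> down \<omega> \<and> down \<omega> \<le> K" if "\<omega> \<in> space M" for \<omega>
    using Y0_bounds[OF that] Y1_bounds[OF that] unfolding up_def down_def by auto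
  \<comment> \<open>versions of the conditional means that respect the bounds everywhere, not only almost surely\<close>
  define p where "p \<omega> = max 0 (min K (real_cond_exp M G up \<omega>))" for \<omega>
  define q where "q \<omega> = max 0 (min K (real_cond_exp M G down \<omega>))" for \<omega>
  have [measurable]: "p \<in> borel_measurable G" "q \<in> borel_measurable G"
    unfolding p_def q_def by measurable
  have pq_bounds: "0 \<le> p \<omega> \<and> p \<omega> \<le> K" "0 \<le> q \<omega> \<and> q \<omega> \<le> K" for \<omega>
    using K unfolding p_def q_def by auto
  have p_eq: "AE \<omega> in M. p \<omega> = real_cond_exp M G up \<omega>"
    using real_cond_exp_bounded[of up K] up_down_bounds unfolding p_def by (auto elim: eventually_mono)
  have q_eq: "AE \<omega> in M. q \<omega> = real_cond_exp M G down \<omega>"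
    using real_cond_exp_bounded[of down K] up_down_bounds unfolding q_def by (auto elim: eventually_mono)
  have up_int: "integrable M up" and down_int: "integrable M down"
    using up_down_bounds by (auto intro: bounded_int)
  have "AE \<omega> in M. Y0 \<omega> < Y1 \<omega> \<longrightarrow> 0 < real_cond_exp M G down \<omega>"
    unfolding down_def by (rule real_cond_exp_pos_if_no_arbitrage[OF Y0 _ _ no_up])
      (use down_int in \<open>simp_all add: down_def[abs_def]\<close>)
  with q_eq have q_pos: "AE \<omega> in M. Y0 \<omega> < Y1 \<omega> \<longrightarrow> 0 < q \<omega>"
    by eventually_elim auto
  have "AE \<omega> in M. - Y0 \<omega> < - Y1 \<omega> \<longrightarrow> 0 < real_cond_exp M G (\<lambda>\<omega>. max 0 (- Y0 \<omega> - - Y1 \<omega>)) \<omega>"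
  proof (rule real_cond_exp_pos_if_no_arbitrage)
    show "integrable M (\<lambda>\<omega>. max 0 (- Y0 \<omega> - - Y1 \<omega>))"
      using up_int by (simp add: up_def[abs_def])
    fix B assume "B \<in> sets G" "AE \<omega> in M. \<omega> \<in> B \<longrightarrow> - Y0 \<omega> \<le> - Y1 \<omega>"
    then show "AE \<omega> in M. \<omega> \<in> B \<longrightarrow> - Y1 \<omega> = - Y0 \<omega>"
      using no_down[of B] by simp
  qed simp_all
  with p_eq have p_pos: "AE \<omega> in M. Y1 \<omega> < Y0 \<omega> \<longrightarrow> 0 < p \<omega>"
    by eventually_elim (simp add: up_def[abs_def])
  define Z where "Z \<omega> = (if Y0 \<omega> < Y1 \<omega> then q \<omega> else if Y1 \<omega> < Y0 \<omega> then p \<omega> else 1)" for \<omega>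
  have pq_G: "p \<in> borel_measurable G" "q \<in> borel_measurable G"
    by measurable
  have [measurable]: "p \<in> borel_measurable H" "q \<in> borel_measurable H"
    using measurable_from_subalg[OF HG pq_G(1)] measurable_from_subalg[OF HG pq_G(2)] .
  have "Z \<in> borel_measurable H"
    unfolding Z_def by measurable
  moreover have "0 \<le> Z \<omega> \<and> Z \<omega> \<le> max 1 K" for \<omega>
    unfolding Z_def using pq_bounds[of \<omega>] by (auto simp: le_max_iff_disj)
  moreover have "AE \<omega> in M. 0 < Z \<omega>"
    using p_pos q_pos unfolding Z_def by eventually_elim auto
  moreover have "AE \<omega> in M. real_cond_exp M G (\<lambda>\<omega>. Z \<omega> * Y1 \<omega>) \<omega> = real_cond_exp M G Z \<omega> * Y0 \<omega>"
    unfolding Z_def by (rule real_cond_exp_cross_weighted[OF Y0 _ Y0_bounds Y1_bounds _ _ pq_bounds])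
      (use p_eq q_eq in \<open>simp_all add: up_def[abs_def] down_def[abs_def]\<close>)
  ultimately show ?thesis by blast
qed

lemma (in sigma_finite_subalgebra) nn_integral_div_real_cond_exp:
  assumes N[measurable]: "N \<in> borel_measurable F" and N_pos: "AE \<omega> in M. 0 < N \<omega>"
    and g[measurable]: "g \<in> borel_measurable F"
    and W[measurable]: "W \<in> borel_measurable M" and W_int: "integrable M W"
    and W_nonneg: "\<And>\<omega>. \<omega> \<in> space M \<Longrightarrow> 0 \<le> W \<omega>" and V_nonneg: "\<And>\<omega>. \<omega> \<in> space M \<Longrightarrow> 0 \<le> V \<omega>"
    and W_cond: "AE \<omega> in M. real_cond_exp M F W \<omega> = N \<omega> * V \<omega>"
  shows "(\<integral>\<^sup>+\<omega>. g \<omega> * ennreal (W \<omega> / N \<omega>) \<partial>M) = (\<integral>\<^sup>+\<omega>. g \<omega> * ennreal (V \<omega>) \<partial>M)"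
proof -
  have mult_ennreal: "x * ennreal a * ennreal b = x * ennreal (a * b)" if "0 \<le> a" "0 \<le> b"
    for x :: ennreal and a b
    using that by (simp add: ennreal_mult mult.assoc)
  have [measurable]: "(\<lambda>\<omega>. g \<omega> * ennreal (1 / N \<omega>)) \<in> borel_measurable F"
    by measurable
  have "(\<integral>\<^sup>+\<omega>. g \<omega> * ennreal (W \<omega> / N \<omega>) \<partial>M) = (\<integral>\<^sup>+\<omega>. g \<omega> * ennreal (1 / N \<omega>) * ennreal (W \<omega>) \<partial>M)"
    by (rule nn_integral_cong_AE)
      (use N_pos AE_space in \<open>eventually_elim, use W_nonneg in \<open>simp add: mult_ennreal\<close>\<close>)
  also have "\<dots> = (\<integral>\<^sup>+\<omega>. g \<omega> * ennreal (1 / N \<omega>) * ennreal (real_cond_exp M F W \<omega>) \<partial>M)"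
    by (rule nn_integral_mult_real_cond_exp[OF W W_int]) (use W_nonneg in auto)
  also have "\<dots> = (\<integral>\<^sup>+\<omega>. g \<omega> * ennreal (V \<omega>) \<partial>M)"
    by (rule nn_integral_cong_AE)
      (use N_pos W_cond AE_space in \<open>eventually_elim, use V_nonneg in \<open>simp add: mult_ennreal\<close>\<close>)
  finally show ?thesis .
qed

text \<open>\<open>E[Z | G] = 1\<close> and \<open>E[Z Y1 | G] = Y0\<close>, stated by integration against all nonnegative
  \<open>G\<close>-measurable test functions.\<close>

definition one_step_martingale_density ::
    "'a measure \<Rightarrow> 'a measure \<Rightarrow> 'a measure \<Rightarrow> ('a \<Rightarrow> real) \<Rightarrow> ('a \<Rightarrow> real) \<Rightarrow> ('a \<Rightarrow> real) \<Rightarrow> bool" where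
  "one_step_martingale_density M G H Y0 Y1 Z \<longleftrightarrow>
     Z \<in> borel_measurable H \<and> (\<forall>\<omega>. 0 \<le> Z \<omega>) \<and> (AE \<omega> in M. 0 < Z \<omega>) \<and>
     (\<forall>g\<in>borel_measurable G. (\<integral>\<^sup>+\<omega>. g \<omega> * ennreal (Z \<omega>) \<partial>M) = (\<integral>\<^sup>+\<omega>. g \<omega> \<partial>M)) \<and>
     (\<forall>g\<in>borel_measurable G. (\<integral>\<^sup>+\<omega>. g \<omega> * ennreal (Z \<omega> * Y1 \<omega>) \<partial>M) = (\<integral>\<^sup>+\<omega>. g \<omega> * ennreal (Y0 \<omega>) \<partial>M))"

lemma one_step_martingale_density_normalize:
  fixes Y0 Y1 Z :: "'a \<Rightarrow> real"
  assumes P: "prob_space M" and subG: "subalgebra M G" and subH: "subalgebra M H" and GH: "sets G \<subseteq> sets H"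
    and Y0[measurable]: "Y0 \<in> borel_measurable G" and Y1[measurable]: "Y1 \<in> borel_measurable H"
    and Y0_bounds: "\<And>\<omega>. \<omega> \<in> space M \<Longrightarrow> 0 \<le> Y0 \<omega> \<and> Y0 \<omega> \<le> K"
    and Y1_bounds: "\<And>\<omega>. \<omega> \<in> space M \<Longrightarrow> 0 \<le> Y1 \<omega> \<and> Y1 \<omega> \<le> K"
    and Z_meas[measurable]: "Z \<in> borel_measurable H" and Z_bounds: "\<And>\<omega>. 0 \<le> Z \<omega> \<and> Z \<omega> \<le> L"
    and Z_pos: "AE \<omega> in M. 0 < Z \<omega>"
    and Z_cond: "AE \<omega> in M. real_cond_exp M G (\<lambda>\<omega>. Z \<omega> * Y1 \<omega>) \<omega> = real_cond_exp M G Z \<omega> * Y0 \<omega>"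
  shows "one_step_martingale_density M G H Y0 Y1
    (\<lambda>\<omega>. if 0 < real_cond_exp M G Z \<omega> then Z \<omega> / real_cond_exp M G Z \<omega> else 1)"
proof -
  interpret prob_space M by (rule P)
  interpret finite_measure_subalgebra M G by unfold_locales (rule subG)
  define N where "N = real_cond_exp M G Z"
  have HG: "subalgebra H G"
    using subG subH GH unfolding subalgebra_def by auto
  have N_G[measurable]: "N \<in> borel_measurable G"
    unfolding N_def by simp
  have [measurable]: "N \<in> borel_measurable H" "Z \<in> borel_measurable M" "Y1 \<in> borel_measurable M"
    using measurable_from_subalg[OF HG N_G] measurable_from_subalg[OF subH Z_meas]
      measurable_from_subalg[OF subH Y1] by auto
  have L: "0 \<le> L"
    using Z_bounds by (meson order_trans)
  have Z_int: "integrable M Z"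
    by (rule integrable_const_bound[where B=L]) (use Z_bounds in auto)
  have ZY1_int: "integrable M (\<lambda>\<omega>. Z \<omega> * Y1 \<omega>)"
    by (rule integrable_const_bound[where B="L * K"], rule AE_I2)
      (use Z_bounds Y1_bounds L in \<open>auto simp: abs_mult intro!: mult_mono\<close>)
  have N_pos: "AE \<omega> in M. 0 < N \<omega>"
  proof -
    have "AE \<omega> in M. real_cond_exp M G (\<lambda>_. 0) \<omega> < N \<omega>"
      unfolding N_def by (rule real_cond_exp_mono_strict) (use Z_pos Z_int in auto)
    moreover have "AE \<omega> in M. real_cond_exp M G (\<lambda>_. 0) \<omega> = 0"
      by (rule real_cond_exp_F_meas) auto
    ultimately show ?thesis by eventually_elim simp
  qed
  define Z' where "Z' \<omega> = (if 0 < N \<omega> then Z \<omega> / N \<omega> else 1)" for \<omega>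
  have Z'_eq: "AE \<omega> in M. Z' \<omega> = Z \<omega> / N \<omega>"
    using N_pos by eventually_elim (simp add: Z'_def)
  have "(\<integral>\<^sup>+\<omega>. g \<omega> * ennreal (Z' \<omega>) \<partial>M) = (\<integral>\<^sup>+\<omega>. g \<omega> \<partial>M)" if "g \<in> borel_measurable G" for g
  proof -
    have "(\<integral>\<^sup>+\<omega>. g \<omega> * ennreal (Z' \<omega>) \<partial>M) = (\<integral>\<^sup>+\<omega>. g \<omega> * ennreal (Z \<omega> / N \<omega>) \<partial>M)"
      using Z'_eq by (intro nn_integral_cong_AE) (auto elim: eventually_mono)
    also have "\<dots> = (\<integral>\<^sup>+\<omega>. g \<omega> * ennreal 1 \<partial>M)"
      by (rule nn_integral_div_real_cond_exp[OF N_G N_pos that _ Z_int]) (use Z_bounds in \<open>auto simp: N_def\<close>)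
    finally show ?thesis by simp
  qed
  moreover have "(\<integral>\<^sup>+\<omega>. g \<omega> * ennreal (Z' \<omega> * Y1 \<omega>) \<partial>M) = (\<integral>\<^sup>+\<omega>. g \<omega> * ennreal (Y0 \<omega>) \<partial>M)"
    if "g \<in> borel_measurable G" for g
  proof -
    have "(\<integral>\<^sup>+\<omega>. g \<omega> * ennreal (Z' \<omega> * Y1 \<omega>) \<partial>M) = (\<integral>\<^sup>+\<omega>. g \<omega> * ennreal (Z \<omega> * Y1 \<omega> / N \<omega>) \<partial>M)"
      using Z'_eq by (intro nn_integral_cong_AE) (auto elim: eventually_mono)
    also have "\<dots> = (\<integral>\<^sup>+\<omega>. g \<omega> * ennreal (Y0 \<omega>) \<partial>M)"
      by (rule nn_integral_div_real_cond_exp[OF N_G N_pos that _ ZY1_int])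
        (use Z_bounds Y0_bounds Y1_bounds Z_cond in \<open>auto simp: N_def mult.commute\<close>)
    finally show ?thesis .
  qed
  moreover have "AE \<omega> in M. 0 < Z' \<omega>"
    using Z_pos N_pos by eventually_elim (simp add: Z'_def)
  moreover have "Z' \<in> borel_measurable H" "\<forall>\<omega>. 0 \<le> Z' \<omega>"
    using Z_bounds unfolding Z'_def by auto
  ultimately show ?thesis
    unfolding one_step_martingale_density_def Z'_def N_def by blast
qed

lemma one_period_martingale_density:
  fixes Y0 Y1 :: "'a \<Rightarrow> real"
  assumes P: "prob_space M" and subG: "subalgebra M G" and subH: "subalgebra M H" and GH: "sets G \<subseteq> sets H"
    and Y0: "Y0 \<in> borel_measurable G" and Y1: "Y1 \<in> borel_measurable H"
    and Y0_bounds: "\<And>\<omega>. \<omega> \<in> space M \<Longrightarrow> 0 \<le> Y0 \<omega> \<and> Y0 \<omega> \<le> K"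
    and Y1_bounds: "\<And>\<omega>. \<omega> \<in> space M \<Longrightarrow> 0 \<le> Y1 \<omega> \<and> Y1 \<omega> \<le> K"
    and no_up: "\<And>B. B \<in> sets G \<Longrightarrow> (AE \<omega> in M. \<omega> \<in> B \<longrightarrow> Y0 \<omega> \<le> Y1 \<omega>) \<Longrightarrow> (AE \<omega> in M. \<omega> \<in> B \<longrightarrow> Y1 \<omega> = Y0 \<omega>)"
    and no_down: "\<And>B. B \<in> sets G \<Longrightarrow> (AE \<omega> in M. \<omega> \<in> B \<longrightarrow> Y1 \<omega> \<le> Y0 \<omega>) \<Longrightarrow> (AE \<omega> in M. \<omega> \<in> B \<longrightarrow> Y1 \<omega> = Y0 \<omega>)"
  shows "\<exists>Z. one_step_martingale_density M G H Y0 Y1 Z"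
proof -
  obtain Z where "Z \<in> borel_measurable H" "\<forall>\<omega>. 0 \<le> Z \<omega> \<and> Z \<omega> \<le> max 1 K" "AE \<omega> in M. 0 < Z \<omega>"
    "AE \<omega> in M. real_cond_exp M G (\<lambda>\<omega>. Z \<omega> * Y1 \<omega>) \<omega> = real_cond_exp M G Z \<omega> * Y0 \<omega>"
    using one_period_positive_weight[OF assms] by blast
  then show ?thesis
    using one_step_martingale_density_normalize[OF P subG subH GH Y0 Y1 Y0_bounds Y1_bounds] by blast
qed

lemma set_integral_density_eq_nn_integral:
  fixes D f :: "'a \<Rightarrow> real"
  assumes [measurable]: "D \<in> borel_measurable M" and D_nonneg: "\<And>\<omega>. 0 \<le> D \<omega>"
    and [measurable]: "f \<in> borel_measurable M" and f_nonneg: "\<And>\<omega>. 0 \<le> f \<omega>"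
    and [measurable]: "B \<in> sets M"
  shows "(\<integral>\<omega>\<in>B. f \<omega> \<partial>density M (\<lambda>\<omega>. ennreal (D \<omega>)))
    = enn2real (\<integral>\<^sup>+\<omega>. indicator B \<omega> * ennreal (D \<omega> * f \<omega>) \<partial>M)"
proof -
  have "(\<integral>\<omega>\<in>B. f \<omega> \<partial>density M (\<lambda>\<omega>. ennreal (D \<omega>))) = (\<integral>\<omega>. D \<omega> *\<^sub>R (indicator B \<omega> *\<^sub>R f \<omega>) \<partial>M)"
    unfolding set_lebesgue_integral_def using D_nonneg by (subst integral_density) auto
  also have "\<dots> = enn2real (\<integral>\<^sup>+\<omega>. ennreal (D \<omega> *\<^sub>R (indicator B \<omega> *\<^sub>R f \<omega>)) \<partial>M)"
    by (rule integral_eq_nn_integral) (use D_nonneg f_nonneg in \<open>auto simp: indicator_def\<close>)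
  also have "(\<integral>\<^sup>+\<omega>. ennreal (D \<omega> *\<^sub>R (indicator B \<omega> *\<^sub>R f \<omega>)) \<partial>M)
      = (\<integral>\<^sup>+\<omega>. indicator B \<omega> * ennreal (D \<omega> * f \<omega>) \<partial>M)"
    by (intro nn_integral_cong) (simp add: indicator_def)
  finally show ?thesis .
qed

locale filtered_prob_space = prob_space M for M :: "'a measure" +
  fixes F :: "nat \<Rightarrow> 'a measure" and T :: nat
  assumes filtration: "filtration_on M F T"
begin

lemma subalgebra_F: "t \<le> T \<Longrightarrow> subalgebra M (F t)"
  using filtration unfolding filtration_on_def by auto

lemma space_F[simp]: "t \<le> T \<Longrightarrow> space (F t) = space M"
  using subalgebra_F unfolding subalgebra_def by auto

lemma sets_F_subset: "t \<le> T \<Longrightarrow> sets (F t) \<subseteq> sets M"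
  using subalgebra_F unfolding subalgebra_def by auto

lemma sets_F_mono: "s \<le> t \<Longrightarrow> t \<le> T \<Longrightarrow> sets (F s) \<subseteq> sets (F t)"
  using filtration unfolding filtration_on_def by auto

lemma subalgebra_F_F: "s \<le> t \<Longrightarrow> t \<le> T \<Longrightarrow> subalgebra (F t) (F s)"
  unfolding subalgebra_def using sets_F_mono by simp

lemma measurable_F_mono: "f \<in> measurable (F s) N \<Longrightarrow> s \<le> t \<Longrightarrow> t \<le> T \<Longrightarrow> f \<in> measurable (F t) N"
  using measurable_from_subalg[OF subalgebra_F_F] by blast

lemma measurable_F_M: "f \<in> measurable (F t) N \<Longrightarrow> t \<le> T \<Longrightarrow> f \<in> measurable M N"
  using measurable_from_subalg[OF subalgebra_F] by blast

context
  fixes X :: "nat \<Rightarrow> 'a \<Rightarrow> real" and Zs :: "nat \<Rightarrow> 'a \<Rightarrow> real"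
  assumes step_density: "\<And>k. k < T \<Longrightarrow> one_step_martingale_density M (F k) (F (Suc k)) (X k) (X (Suc k)) (Zs k)"
begin

lemma step_density_factor_measurable: "k < T \<Longrightarrow> Zs k \<in> borel_measurable (F (Suc k))"
  using step_density unfolding one_step_martingale_density_def by blast

lemma step_density_factor_nonneg: "k < T \<Longrightarrow> 0 \<le> Zs k \<omega>"
  using step_density unfolding one_step_martingale_density_def by blast

lemma step_density_factor_pos: "k < T \<Longrightarrow> AE \<omega> in M. 0 < Zs k \<omega>"
  using step_density unfolding one_step_martingale_density_def by blast

lemma nn_integral_step_density_factor:
  "k < T \<Longrightarrow> g \<in> borel_measurable (F k) \<Longrightarrow> (\<integral>\<^sup>+\<omega>. g \<omega> * ennreal (Zs k \<omega>) \<partial>M) = (\<integral>\<^sup>+\<omega>. g \<omega> \<partial>M)"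
  using step_density unfolding one_step_martingale_density_def by blast

lemma nn_integral_step_density_factor_process:
  "k < T \<Longrightarrow> g \<in> borel_measurable (F k) \<Longrightarrow>
    (\<integral>\<^sup>+\<omega>. g \<omega> * ennreal (Zs k \<omega> * X (Suc k) \<omega>) \<partial>M) = (\<integral>\<^sup>+\<omega>. g \<omega> * ennreal (X k \<omega>) \<partial>M)"
  using step_density unfolding one_step_martingale_density_def by blast

lemma step_density_nonneg: "k \<le> T \<Longrightarrow> 0 \<le> (\<Prod>j<k. Zs j \<omega>)"
  by (intro prod_nonneg step_density_factor_nonneg) auto

lemma step_density_measurable: "k \<le> T \<Longrightarrow> (\<lambda>\<omega>. \<Prod>j<k. Zs j \<omega>) \<in> borel_measurable (F k)"
proof (induction k)
  case (Suc k)
  then have "(\<lambda>\<omega>. \<Prod>j<k. Zs j \<omega>) \<in> borel_measurable (F k)"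
    by simp
  from measurable_F_mono[OF this _ Suc.prems]
  have "(\<lambda>\<omega>. \<Prod>j<k. Zs j \<omega>) \<in> borel_measurable (F (Suc k))"
    by simp
  moreover have "Zs k \<in> borel_measurable (F (Suc k))"
    using step_density_factor_measurable Suc by simp
  ultimately show ?case by simp
qed simp

lemma nn_integral_step_density_product:
  assumes "n \<le> m" "m \<le> T" and g: "g \<in> borel_measurable (F n)"
  shows "(\<integral>\<^sup>+\<omega>. g \<omega> * ennreal (\<Prod>k<m. Zs k \<omega>) \<partial>M) = (\<integral>\<^sup>+\<omega>. g \<omega> * ennreal (\<Prod>k<n. Zs k \<omega>) \<partial>M)"
  using assms(1,2)
proof (induction m rule: dec_induct)
  case (step m)
  have [measurable]: "g \<in> borel_measurable (F m)" "(\<lambda>\<omega>. \<Prod>j<m. Zs j \<omega>) \<in> borel_measurable (F m)"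
    using measurable_F_mono[OF g] step_density_measurable step by auto
  have "(\<integral>\<^sup>+\<omega>. g \<omega> * ennreal (\<Prod>k<Suc m. Zs k \<omega>) \<partial>M)
      = (\<integral>\<^sup>+\<omega>. (g \<omega> * ennreal (\<Prod>k<m. Zs k \<omega>)) * ennreal (Zs m \<omega>) \<partial>M)"
    using step_density_nonneg[of m] step_density_factor_nonneg[of m] step
    by (intro nn_integral_cong) (simp add: ennreal_mult mult.assoc)
  also have "\<dots> = (\<integral>\<^sup>+\<omega>. g \<omega> * ennreal (\<Prod>k<m. Zs k \<omega>) \<partial>M)"
    by (rule nn_integral_step_density_factor) (use step in auto)
  finally show ?case using step by simp
qed simp

lemma nn_integral_step_density_product_process:
  assumes "n \<le> m" "m \<le> T" and g: "g \<in> borel_measurable (F n)"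
    and X_nonneg: "\<And>t \<omega>. t \<le> T \<Longrightarrow> 0 \<le> X t \<omega>"
  shows "(\<integral>\<^sup>+\<omega>. g \<omega> * ennreal ((\<Prod>k<m. Zs k \<omega>) * X m \<omega>) \<partial>M)
    = (\<integral>\<^sup>+\<omega>. g \<omega> * ennreal ((\<Prod>k<n. Zs k \<omega>) * X n \<omega>) \<partial>M)"
  using assms(1,2)
proof (induction m rule: dec_induct)
  case (step m)
  have [measurable]: "g \<in> borel_measurable (F m)" "(\<lambda>\<omega>. \<Prod>j<m. Zs j \<omega>) \<in> borel_measurable (F m)"
    using measurable_F_mono[OF g] step_density_measurable step by auto
  have "(\<integral>\<^sup>+\<omega>. g \<omega> * ennreal ((\<Prod>k<Suc m. Zs k \<omega>) * X (Suc m) \<omega>) \<partial>M)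
      = (\<integral>\<^sup>+\<omega>. (g \<omega> * ennreal (\<Prod>k<m. Zs k \<omega>)) * ennreal (Zs m \<omega> * X (Suc m) \<omega>) \<partial>M)"
    using step_density_nonneg[of m] step_density_factor_nonneg[of m] X_nonneg step
    by (intro nn_integral_cong) (simp add: ennreal_mult mult.assoc)
  also have "\<dots> = (\<integral>\<^sup>+\<omega>. (g \<omega> * ennreal (\<Prod>k<m. Zs k \<omega>)) * ennreal (X m \<omega>) \<partial>M)"
    by (rule nn_integral_step_density_factor_process) (use step in auto)
  also have "\<dots> = (\<integral>\<^sup>+\<omega>. g \<omega> * ennreal ((\<Prod>k<m. Zs k \<omega>) * X m \<omega>) \<partial>M)"
    using step_density_nonneg[of m] X_nonneg step
    by (intro nn_integral_cong) (simp add: ennreal_mult mult.assoc)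
  finally show ?case using step by simp
qed simp

lemma density_mass_step_density_product: "(\<integral>\<^sup>+\<omega>. ennreal (\<Prod>k<T. Zs k \<omega>) \<partial>M) = 1"
  using nn_integral_step_density_product[of 0 T "\<lambda>_. 1"] by (simp add: emeasure_space_1)

lemma equiv_prob_density_step_density_product:
  "equiv_prob (density M (\<lambda>\<omega>. ennreal (\<Prod>k<T. Zs k \<omega>))) M"
  unfolding equiv_prob_def
proof (intro conjI ballI)
  let ?Q = "density M (\<lambda>\<omega>. ennreal (\<Prod>k<T. Zs k \<omega>))"
  have [measurable]: "(\<lambda>\<omega>. \<Prod>k<T. Zs k \<omega>) \<in> borel_measurable M"
    using measurable_F_M[OF step_density_measurable] by simp
  have "emeasure ?Q (space M) = (\<integral>\<^sup>+\<omega>. ennreal (\<Prod>k<T. Zs k \<omega>) \<partial>M)"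
    by (subst emeasure_density) (auto intro!: nn_integral_cong)
  then show "prob_space ?Q"
    by (intro prob_spaceI) (simp add: density_mass_step_density_product)
  show "sets ?Q = sets M" by simp
  have pos: "AE \<omega> in M. 0 < (\<Prod>k<T. Zs k \<omega>)"
  proof -
    have "AE \<omega> in M. \<forall>k\<in>{..<T}. 0 < Zs k \<omega>"
      by (rule AE_ball_countable') (use step_density_factor_pos in auto)
    then show ?thesis by eventually_elim (auto intro: prod_pos)
  qed
  fix N assume N: "N \<in> sets M"
  have "emeasure ?Q N = 0 \<longleftrightarrow> N \<in> null_sets ?Q"
    using N by (auto simp: null_sets_def)
  also have "\<dots> \<longleftrightarrow> (AE \<omega> in M. \<omega> \<in> N \<longrightarrow> ennreal (\<Prod>k<T. Zs k \<omega>) = 0)"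
    using N by (subst null_sets_density_iff) auto
  also have "\<dots> \<longleftrightarrow> (AE \<omega> in M. \<omega> \<notin> N)"
  proof
    assume "AE \<omega> in M. \<omega> \<in> N \<longrightarrow> ennreal (\<Prod>k<T. Zs k \<omega>) = 0"
    then show "AE \<omega> in M. \<omega> \<notin> N"
      using pos by eventually_elim (metis ennreal_eq_0_iff linorder_not_le)
  qed (auto elim: eventually_mono)
  also have "\<dots> \<longleftrightarrow> emeasure M N = 0"
    using AE_iff_measurable[OF N, of "\<lambda>\<omega>. \<omega> \<notin> N"] N sets.sets_into_space by auto
  finally show "emeasure ?Q N = 0 \<longleftrightarrow> emeasure M N = 0" .
qed

lemma nn_integral_step_density_product_tower:
  assumes st: "s \<le> t" "t \<le> T" and B: "B \<in> sets (F s)"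
    and X_adapted: "\<And>t. t \<le> T \<Longrightarrow> X t \<in> borel_measurable (F t)"
    and X_nonneg: "\<And>t \<omega>. t \<le> T \<Longrightarrow> 0 \<le> X t \<omega>"
  shows "(\<integral>\<^sup>+\<omega>. indicator B \<omega> * ennreal ((\<Prod>k<T. Zs k \<omega>) * X t \<omega>) \<partial>M)
    = (\<integral>\<^sup>+\<omega>. indicator B \<omega> * ennreal ((\<Prod>k<T. Zs k \<omega>) * X s \<omega>) \<partial>M)"
proof -
  let ?D = "\<lambda>k \<omega>. \<Prod>j<k. Zs j \<omega>"
  have D_nonneg: "k \<le> T \<Longrightarrow> 0 \<le> ?D k \<omega>" for k \<omega>
    by (rule step_density_nonneg)
  have Bt: "B \<in> sets (F t)" using sets_F_mono[OF st] B by auto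
  have [measurable]: "(\<lambda>\<omega>. indicator B \<omega> * ennreal (X t \<omega>)) \<in> borel_measurable (F t)"
    "(\<lambda>\<omega>. indicator B \<omega> * ennreal (X s \<omega>)) \<in> borel_measurable (F s)"
    "(\<lambda>\<omega>. indicator B \<omega> :: ennreal) \<in> borel_measurable (F s)"
    using B Bt X_adapted st by auto
  have "(\<integral>\<^sup>+\<omega>. indicator B \<omega> * ennreal (?D T \<omega> * X t \<omega>) \<partial>M)
      = (\<integral>\<^sup>+\<omega>. (indicator B \<omega> * ennreal (X t \<omega>)) * ennreal (?D T \<omega>) \<partial>M)"
    using D_nonneg X_nonneg st by (intro nn_integral_cong) (simp add: ennreal_mult mult_ac)
  also have "\<dots> = (\<integral>\<^sup>+\<omega>. (indicator B \<omega> * ennreal (X t \<omega>)) * ennreal (?D t \<omega>) \<partial>M)"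
    by (rule nn_integral_step_density_product) (use st in auto)
  also have "\<dots> = (\<integral>\<^sup>+\<omega>. indicator B \<omega> * ennreal (?D t \<omega> * X t \<omega>) \<partial>M)"
    using D_nonneg X_nonneg st by (intro nn_integral_cong) (simp add: ennreal_mult mult_ac)
  also have "\<dots> = (\<integral>\<^sup>+\<omega>. indicator B \<omega> * ennreal (?D s \<omega> * X s \<omega>) \<partial>M)"
    by (rule nn_integral_step_density_product_process) (use st X_nonneg in auto)
  also have "\<dots> = (\<integral>\<^sup>+\<omega>. (indicator B \<omega> * ennreal (X s \<omega>)) * ennreal (?D s \<omega>) \<partial>M)"
    using D_nonneg X_nonneg st by (intro nn_integral_cong) (simp add: ennreal_mult mult_ac)
  also have "\<dots> = (\<integral>\<^sup>+\<omega>. (indicator B \<omega> * ennreal (X s \<omega>)) * ennreal (?D T \<omega>) \<partial>M)"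
    by (rule nn_integral_step_density_product[symmetric]) (use st in auto)
  also have "\<dots> = (\<integral>\<^sup>+\<omega>. indicator B \<omega> * ennreal (?D T \<omega> * X s \<omega>) \<partial>M)"
    using D_nonneg X_nonneg st by (intro nn_integral_cong) (simp add: ennreal_mult mult_ac)
  finally show ?thesis .
qed

lemma martingale_on_density_step_density_product:
  assumes X_adapted: "\<And>t. t \<le> T \<Longrightarrow> X t \<in> borel_measurable (F t)"
    and X_bounds: "\<And>t \<omega>. t \<le> T \<Longrightarrow> 0 \<le> X t \<omega> \<and> X t \<omega> \<le> K"
  shows "martingale_on (density M (\<lambda>\<omega>. ennreal (\<Prod>k<T. Zs k \<omega>))) F T X"
proof -
  let ?D = "\<lambda>\<omega>. \<Prod>k<T. Zs k \<omega>"
  let ?Q = "density M (\<lambda>\<omega>. ennreal (?D \<omega>))"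
  have D_meas[measurable]: "?D \<in> borel_measurable M"
    using measurable_F_M[OF step_density_measurable] by simp
  have D_nonneg: "0 \<le> ?D \<omega>" for \<omega>
    by (rule step_density_nonneg) simp
  have X_meas[measurable]: "t \<le> T \<Longrightarrow> X t \<in> borel_measurable M" for t
    using measurable_F_M[OF X_adapted] by simp
  have X_nonneg: "\<And>t \<omega>. t \<le> T \<Longrightarrow> 0 \<le> X t \<omega>"
    using X_bounds by blast
  have K: "0 \<le> K"
    using X_bounds[of 0] by (meson order_trans zero_le)
  have D_int: "integrable M ?D"
    by (rule integrableI_nonneg) (use D_nonneg density_mass_step_density_product in auto)
  have Q_int: "integrable ?Q (X t)" if t: "t \<le> T" for t
  proof -
    have "integrable M (\<lambda>\<omega>. ?D \<omega> *\<^sub>R X t \<omega>)"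
    proof (rule Bochner_Integration.integrable_bound[OF integrable_mult_right[OF D_int, of K]])
      show "AE \<omega> in M. norm (?D \<omega> *\<^sub>R X t \<omega>) \<le> norm (K * ?D \<omega>)"
        using D_nonneg X_bounds[OF t] K
        by (intro AE_I2) (auto simp: abs_mult mult.commute intro!: mult_right_mono)
    qed (use t in measurable)
    then show ?thesis
      using t D_nonneg by (subst integrable_density) auto
  qed
  have "AE \<omega> in ?Q. real_cond_exp ?Q (F s) (X t) \<omega> = X s \<omega>" if st: "s \<le> t" "t \<le> T" for s t
  proof -
    have "prob_space ?Q"
      using equiv_prob_density_step_density_product unfolding equiv_prob_def by blast
    moreover have "subalgebra ?Q (F s)"
      using subalgebra_F[of s] st unfolding subalgebra_def by auto
    ultimately interpret finite_measure_subalgebra ?Q "F s"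
      by (intro finite_measure_subalgebra.intro finite_measure_subalgebra_axioms.intro)
        (simp_all add: prob_space_def)
    show ?thesis
    proof (rule real_cond_exp_charact)
      fix B assume B: "B \<in> sets (F s)"
      then have "B \<in> sets M" using sets_F_subset[of s] st by auto
      then show "(\<integral>\<omega>\<in>B. X t \<omega> \<partial>?Q) = (\<integral>\<omega>\<in>B. X s \<omega> \<partial>?Q)"
        using set_integral_density_eq_nn_integral[OF D_meas D_nonneg X_meas[of t] X_nonneg[of t]]
          set_integral_density_eq_nn_integral[OF D_meas D_nonneg X_meas[of s] X_nonneg[of s]]
          nn_integral_step_density_product_tower[OF st B X_adapted X_nonneg] st by simp
    qed (use Q_int X_adapted st in auto)
  qed
  then show ?thesis
    unfolding martingale_on_def using X_adapted Q_int by blast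
qed

end

lemma bounded_no_arbitrage_equivalent_martingale_measure:
  assumes X_adapted: "\<And>t. t \<le> T \<Longrightarrow> X t \<in> borel_measurable (F t)"
    and X_bounds: "\<And>t \<omega>. t \<le> T \<Longrightarrow> 0 \<le> X t \<omega> \<and> X t \<omega> \<le> K"
    and no_up: "\<And>k B. k < T \<Longrightarrow> B \<in> sets (F k) \<Longrightarrow>
      (AE \<omega> in M. \<omega> \<in> B \<longrightarrow> X k \<omega> \<le> X (Suc k) \<omega>) \<Longrightarrow> (AE \<omega> in M. \<omega> \<in> B \<longrightarrow> X (Suc k) \<omega> = X k \<omega>)"
    and no_down: "\<And>k B. k < T \<Longrightarrow> B \<in> sets (F k) \<Longrightarrow>
      (AE \<omega> in M. \<omega> \<in> B \<longrightarrow> X (Suc k) \<omega> \<le> X k \<omega>) \<Longrightarrow> (AE \<omega> in M. \<omega> \<in> B \<longrightarrow> X (Suc k) \<omega> = X k \<omega>)"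
  shows "\<exists>Q. equiv_prob Q M \<and> martingale_on Q F T X"
proof -
  have "\<exists>Z. one_step_martingale_density M (F k) (F (Suc k)) (X k) (X (Suc k)) Z" if k: "k < T" for k
    by (rule one_period_martingale_density[OF prob_space_axioms subalgebra_F subalgebra_F sets_F_mono, where K=K])
      (use k X_adapted X_bounds no_up no_down in auto)
  then obtain Zs where "\<And>k. k < T \<Longrightarrow> one_step_martingale_density M (F k) (F (Suc k)) (X k) (X (Suc k)) (Zs k)"
    by metis
  then show ?thesis
    using equiv_prob_density_step_density_product martingale_on_density_step_density_product[OF _ X_adapted X_bounds]
    by blast
qed

lemma martingale_on_AE_cong:
  assumes Q: "equiv_prob Q M" and mart: "martingale_on Q F T X"
    and Y_adapted: "\<And>t. t \<le> T \<Longrightarrow> Y t \<in> borel_measurable (F t)"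
    and Y_eq: "\<And>t. t \<le> T \<Longrightarrow> AE \<omega> in M. Y t \<omega> = X t \<omega>"
  shows "martingale_on Q F T Y"
proof -
  have sets_Q: "sets Q = sets M"
    using Q unfolding equiv_prob_def by blast
  have meas_Q: "f \<in> borel_measurable Q \<longleftrightarrow> f \<in> borel_measurable M" for f :: "'a \<Rightarrow> real"
    by (simp add: measurable_cong_sets[OF sets_Q refl])
  have X_adapted: "\<And>t. t \<le> T \<Longrightarrow> X t \<in> borel_measurable (F t)"
    and X_int: "\<And>t. t \<le> T \<Longrightarrow> integrable Q (X t)"
    and X_mart: "\<And>s t. s \<le> t \<Longrightarrow> t \<le> T \<Longrightarrow> AE \<omega> in Q. real_cond_exp Q (F s) (X t) \<omega> = X s \<omega>"
    using mart unfolding martingale_on_def by blast+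
  have XY_meas: "X t \<in> borel_measurable Q" "Y t \<in> borel_measurable Q" if "t \<le> T" for t
    using measurable_F_M[OF X_adapted] measurable_F_M[OF Y_adapted] that by (auto simp: meas_Q)
  have Y_eq_Q: "AE \<omega> in Q. Y t \<omega> = X t \<omega>" if t: "t \<le> T" for t
  proof -
    obtain N where N: "{\<omega>\<in>space M. \<not> Y t \<omega> = X t \<omega>} \<subseteq> N" "emeasure M N = 0" "N \<in> sets M"
      using Y_eq[OF t] by (rule AE_E)
    moreover have "emeasure Q N = 0"
      using Q N unfolding equiv_prob_def by blast
    ultimately show ?thesis
      using sets_eq_imp_space_eq[OF sets_Q] sets_Q by (intro AE_I[of _ _ N]) auto
  qed
  have "integrable Q (Y t)" if "t \<le> T" for t
    using integrable_cong_AE[OF XY_meas(2) XY_meas(1) Y_eq_Q] X_int that by blast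
  moreover have "AE \<omega> in Q. real_cond_exp Q (F s) (Y t) \<omega> = Y s \<omega>" if st: "s \<le> t" "t \<le> T" for s t
  proof -
    have "prob_space Q"
      using Q unfolding equiv_prob_def by blast
    moreover have "subalgebra Q (F s)"
      using subalgebra_F[of s] st sets_Q sets_eq_imp_space_eq[OF sets_Q] unfolding subalgebra_def by auto
    ultimately interpret finite_measure_subalgebra Q "F s"
      by (intro finite_measure_subalgebra.intro finite_measure_subalgebra_axioms.intro)
        (simp_all add: prob_space_def)
    show ?thesis
      using real_cond_exp_cong[OF Y_eq_Q[OF st(2)] XY_meas(2,1)[OF st(2)]] X_mart[OF st] Y_eq_Q[of s, OF order_trans[OF st]]
      by eventually_elim auto
  qed
  ultimately show ?thesis
    unfolding martingale_on_def using Y_adapted by blast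
qed

end

section \<open>Equilibrium in the allowance market\<close>

lemma sum_eq_except_one:
  fixes f f' :: "'a \<Rightarrow> 'b::ab_group_add"
  assumes "finite S" "t \<in> S" "\<And>r. r \<in> S \<Longrightarrow> r \<noteq> t \<Longrightarrow> f' r = f r"
  shows "sum f' S = sum f S + (f' t - f t)"
proof -
  have "sum f' (S - {t}) = sum f (S - {t})"
    using assms by (intro sum.cong) auto
  then show ?thesis
    using assms by (simp add: sum.remove)
qed

lemma util_val_eq_integral:
  assumes "integrable M f"
  shows "util_val M f = ereal (integral\<^sup>L M f)"
proof -
  obtain r q where "0 \<le> r" "0 \<le> q" "(\<integral>\<^sup>+x. ennreal (f x) \<partial>M) = ennreal r"
    "(\<integral>\<^sup>+x. ennreal (- f x) \<partial>M) = ennreal q" "integral\<^sup>L M f = r - q"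
    using integrableE[OF assms] by metis
  then show ?thesis unfolding util_val_def by simp
qed

lemma util_val_PInf:
  assumes "util_exists M f" "(\<integral>\<^sup>+\<omega>. ennreal (f \<omega>) \<partial>M) = \<infinity>"
  shows "util_val M f = \<infinity>"
proof -
  obtain q where "(\<integral>\<^sup>+\<omega>. ennreal (- f \<omega>) \<partial>M) = ennreal q"
    using assms(1) unfolding util_exists_def by (cases "\<integral>\<^sup>+\<omega>. ennreal (- f \<omega>) \<partial>M") auto
  then show ?thesis
    using assms(2) unfolding util_val_def by simp
qed

lemma integrable_if_util_val_finite:
  assumes "util_exists M f" "\<bar>util_val M f\<bar> \<noteq> \<infinity>"
  shows "integrable M f"
proof -
  have "(\<integral>\<^sup>+\<omega>. ennreal (f \<omega>) \<partial>M) \<noteq> \<infinity>"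
    using util_val_PInf[OF assms(1)] assms(2) by auto
  then show ?thesis
    using assms(1) unfolding util_exists_def real_integrable_def by auto
qed

lemma util_val_strict_mono:
  fixes U :: "real \<Rightarrow> real"
  assumes P: "finite_measure M" and U: "strict_mono U" "U \<in> borel_measurable borel"
    and w[measurable]: "w \<in> borel_measurable M" and w'[measurable]: "w' \<in> borel_measurable M"
    and ex: "util_exists M (\<lambda>\<omega>. U (w \<omega>))" and fin: "\<bar>util_val M (\<lambda>\<omega>. U (w \<omega>))\<bar> \<noteq> \<infinity>"
    and le: "AE \<omega> in M. w \<omega> \<le> w' \<omega>" and ne: "\<not> (AE \<omega> in M. w' \<omega> = w \<omega>)"
  shows "util_exists M (\<lambda>\<omega>. U (w' \<omega>)) \<and> util_val M (\<lambda>\<omega>. U (w \<omega>)) < util_val M (\<lambda>\<omega>. U (w' \<omega>))"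
proof -
  interpret finite_measure M by (rule P)
  have [measurable]: "U \<in> borel_measurable borel" by (rule U(2))
  have int: "integrable M (\<lambda>\<omega>. U (w \<omega>))"
    by (rule integrable_if_util_val_finite[OF ex fin])
  have U_le: "AE \<omega> in M. U (w \<omega>) \<le> U (w' \<omega>)"
    using le by eventually_elim (simp add: strict_mono_less_eq[OF U(1)])
  have "(\<integral>\<^sup>+\<omega>. ennreal (- U (w' \<omega>)) \<partial>M) \<le> (\<integral>\<^sup>+\<omega>. ennreal (- U (w \<omega>)) \<partial>M)"
    by (intro nn_integral_mono_AE) (use U_le in \<open>eventually_elim, auto intro: ennreal_leI\<close>)
  also have "\<dots> < \<infinity>"
    using ex unfolding util_exists_def by auto
  finally have ex': "util_exists M (\<lambda>\<omega>. U (w' \<omega>))"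
    unfolding util_exists_def by auto
  define S where "S = {\<omega>\<in>space M. w' \<omega> \<noteq> w \<omega>}"
  have S: "S \<in> sets M" unfolding S_def by measurable
  have S_pos: "emeasure M S \<noteq> 0"
    using ne AE_iff_measurable[OF S, of "\<lambda>\<omega>. w' \<omega> = w \<omega>"] unfolding S_def by auto
  show ?thesis
  proof (cases "(\<integral>\<^sup>+\<omega>. ennreal (U (w' \<omega>)) \<partial>M) = \<infinity>")
    case True
    then show ?thesis
      using ex' fin util_val_PInf[OF ex'] by auto
  next
    case False
    then have int': "integrable M (\<lambda>\<omega>. U (w' \<omega>))"
      using ex' unfolding util_exists_def real_integrable_def by auto
    have "integral\<^sup>L M (\<lambda>\<omega>. U (w \<omega>)) < integral\<^sup>L M (\<lambda>\<omega>. U (w' \<omega>))"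
      by (rule integral_less_AE[OF int int' S_pos S])
        (use U_le strict_mono_eq[OF U(1)] in \<open>auto simp: S_def\<close>)
    then show ?thesis
      using ex' unfolding util_val_eq_integral[OF int] util_val_eq_integral[OF int'] by simp
  qed
qed

locale allowance_market_equilibrium = filtered_prob_space M F T
  for M :: "'a measure" and F T +
  fixes I :: "'i set"
    and E :: "'i \<Rightarrow> nat \<Rightarrow> 'a \<Rightarrow> real"
    and C :: "'i \<Rightarrow> nat \<Rightarrow> real \<Rightarrow> 'a \<Rightarrow> real"
    and \<pi> :: real and \<gamma> :: "'i \<Rightarrow> 'a \<Rightarrow> real"
    and U :: "'i \<Rightarrow> real \<Rightarrow> real"
    and A :: "nat \<Rightarrow> 'a \<Rightarrow> real"
    and \<theta>s :: "'i \<Rightarrow> nat \<Rightarrow> 'a \<Rightarrow> real" and \<xi>s :: "'i \<Rightarrow> nat \<Rightarrow> 'a \<Rightarrow> real"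
  assumes I_fin: "finite I"
    and E_adapted: "\<And>i t. i \<in> I \<Longrightarrow> t < T \<Longrightarrow> E i t \<in> borel_measurable (F t)"
    and E_nonneg: "\<And>i t \<omega>. i \<in> I \<Longrightarrow> t < T \<Longrightarrow> \<omega> \<in> space M \<Longrightarrow> 0 \<le> E i t \<omega>"
    and C_meas: "\<And>i t. i \<in> I \<Longrightarrow> t < T \<Longrightarrow>
        (\<lambda>(x, \<omega>). C i t x \<omega>) \<in> borel_measurable (restrict_space borel {0::real..} \<Otimes>\<^sub>M F t)"
    and C_strict_convex: "\<And>i t \<omega>. i \<in> I \<Longrightarrow> t < T \<Longrightarrow> \<omega> \<in> space M \<Longrightarrow>
        strict_convex_on {0..} (\<lambda>x. C i t x \<omega>)"
    and C_cont: "\<And>i t \<omega>. i \<in> I \<Longrightarrow> t < T \<Longrightarrow> \<omega> \<in> space M \<Longrightarrow>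
        continuous_on {0..} (\<lambda>x. C i t x \<omega>)"
    and pi_pos: "\<pi> > 0"
    and \<gamma>_meas: "\<And>i. i \<in> I \<Longrightarrow> \<gamma> i \<in> borel_measurable (F T)"
    and \<gamma>_no_atoms: "cond_distr_no_atoms M (F (T - 1)) (\<lambda>\<omega>. \<Sum>i\<in>I. \<gamma> i \<omega>)"
    and U_cont: "\<And>i. i \<in> I \<Longrightarrow> continuous_on UNIV (U i)"
    and U_mono: "\<And>i. i \<in> I \<Longrightarrow> strict_mono (U i)"
    and A_adapted: "\<And>t. t \<le> T \<Longrightarrow> A t \<in> borel_measurable (F t)"
    and eq_adm: "\<And>i. i \<in> I \<Longrightarrow> admissible M F T (E i) (\<theta>s i) (\<xi>s i)"
    and eq_finite: "\<And>i. i \<in> I \<Longrightarrow>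
        util_exists M (\<lambda>\<omega>. U i (wealth T \<pi> A (C i) (E i) (\<gamma> i) (\<theta>s i) (\<xi>s i) \<omega>)) \<and>
        \<bar>util_val M (\<lambda>\<omega>. U i (wealth T \<pi> A (C i) (E i) (\<gamma> i) (\<theta>s i) (\<xi>s i) \<omega>))\<bar> \<noteq> \<infinity>"
    and eq_clear: "\<And>t \<omega>. t \<le> T \<Longrightarrow> \<omega> \<in> space M \<Longrightarrow> (\<Sum>i\<in>I. \<theta>s i t \<omega>) = 0"
    and eq_opt: "\<And>i \<theta> \<xi>. i \<in> I \<Longrightarrow> admissible M F T (E i) \<theta> \<xi> \<Longrightarrow>
        util_exists M (\<lambda>\<omega>. U i (wealth T \<pi> A (C i) (E i) (\<gamma> i) \<theta> \<xi> \<omega>)) \<Longrightarrow>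
        util_val M (\<lambda>\<omega>. U i (wealth T \<pi> A (C i) (E i) (\<gamma> i) \<theta> \<xi> \<omega>))
          \<le> util_val M (\<lambda>\<omega>. U i (wealth T \<pi> A (C i) (E i) (\<gamma> i) (\<theta>s i) (\<xi>s i) \<omega>))"
begin

abbreviation L where "L i \<theta> \<xi> \<equiv> wealth T \<pi> A (C i) (E i) (\<gamma> i) \<theta> \<xi>"

lemma measurable_cost:
  assumes i: "i \<in> I" and t: "t < T" and f: "f \<in> borel_measurable (F t)"
    and f_nonneg: "\<And>\<omega>. \<omega> \<in> space M \<Longrightarrow> 0 \<le> f \<omega>"
  shows "(\<lambda>\<omega>. C i t (f \<omega>) \<omega>) \<in> borel_measurable (F t)"
proof -
  have "f \<in> measurable (F t) (restrict_space borel {0::real..})"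
    by (rule measurable_restrict_space2) (use f f_nonneg t in auto)
  then have "(\<lambda>\<omega>. (f \<omega>, \<omega>)) \<in> measurable (F t) (restrict_space borel {0::real..} \<Otimes>\<^sub>M F t)"
    by (intro measurable_Pair) auto
  from measurable_compose[OF this C_meas[OF i t]] show ?thesis by simp
qed

lemma wealth_measurable:
  assumes i: "i \<in> I" and adm: "admissible M F T (E i) \<theta> \<xi>"
  shows "L i \<theta> \<xi> \<in> borel_measurable M"
proof -
  have [measurable]: "\<theta> t \<in> borel_measurable M" if "t \<le> T" for t
    using adm measurable_F_M that unfolding admissible_def by blast
  have [measurable]: "\<xi> t \<in> borel_measurable M" "E i t \<in> borel_measurable M"
      "(\<lambda>\<omega>. C i t (\<xi> t \<omega>) \<omega>) \<in> borel_measurable M" if "t < T" for t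
    using adm measurable_F_M E_adapted[OF i] measurable_cost[OF i that] that
    unfolding admissible_def by (meson less_imp_le)+
  have [measurable]: "\<gamma> i \<in> borel_measurable M" "t \<le> T \<Longrightarrow> A t \<in> borel_measurable M" for t
    using \<gamma>_meas[OF i] A_adapted measurable_F_M by blast+
  show ?thesis
    unfolding wealth_def by measurable
qed

lemma optimal_wealth_not_improvable:
  assumes i: "i \<in> I" and adm: "admissible M F T (E i) \<theta> \<xi>"
    and ge: "AE \<omega> in M. L i (\<theta>s i) (\<xi>s i) \<omega> \<le> L i \<theta> \<xi> \<omega>"
  shows "AE \<omega> in M. L i \<theta> \<xi> \<omega> = L i (\<theta>s i) (\<xi>s i) \<omega>"
proof (rule ccontr)
  assume ne: "\<not> ?thesis"
  have "U i \<in> borel_measurable borel"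
    using U_cont[OF i] by (rule borel_measurable_continuous_onI)
  from util_val_strict_mono[OF finite_measure_axioms U_mono[OF i] this
      wealth_measurable[OF i eq_adm[OF i]] wealth_measurable[OF i adm]
      conjunct1[OF eq_finite[OF i]] conjunct2[OF eq_finite[OF i]] ge ne]
  show False
    using eq_opt[OF i adm] by (simp add: not_le[symmetric])
qed

lemma nonneg_gain_AE_zero:
  assumes i: "i \<in> I" and adm: "admissible M F T (E i) \<theta> \<xi>"
    and gain: "\<And>\<omega>. L i \<theta> \<xi> \<omega> = L i (\<theta>s i) (\<xi>s i) \<omega> + G \<omega>"
    and nonneg: "AE \<omega> in M. 0 \<le> G \<omega>"
  shows "AE \<omega> in M. G \<omega> = 0"
proof -
  have "AE \<omega> in M. L i \<theta> \<xi> \<omega> = L i (\<theta>s i) (\<xi>s i) \<omega>"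
    by (rule optimal_wealth_not_improvable[OF i adm]) (use nonneg in \<open>eventually_elim, simp add: gain\<close>)
  then show ?thesis by eventually_elim (simp add: gain)
qed

definition uncovered :: "'i \<Rightarrow> 'a \<Rightarrow> real" where
  "uncovered i \<omega> = (\<Sum>t<T. E i t \<omega> - \<xi>s i t \<omega> - \<theta>s i t \<omega>) - \<gamma> i \<omega> - \<theta>s i T \<omega>"

lemma \<theta>s_adapted: "i \<in> I \<Longrightarrow> t \<le> T \<Longrightarrow> \<theta>s i t \<in> borel_measurable (F t)"
  using eq_adm unfolding admissible_def by blast

lemma \<xi>s_adapted: "i \<in> I \<Longrightarrow> t < T \<Longrightarrow> \<xi>s i t \<in> borel_measurable (F t)"
  using eq_adm unfolding admissible_def by blast

lemma \<xi>s_bounds: "i \<in> I \<Longrightarrow> t < T \<Longrightarrow> \<omega> \<in> space M \<Longrightarrow> 0 \<le> \<xi>s i t \<omega> \<and> \<xi>s i t \<omega> \<le> E i t \<omega>"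
  using eq_adm unfolding admissible_def by blast

lemma uncovered_measurable: "i \<in> I \<Longrightarrow> uncovered i \<in> borel_measurable (F T)"
proof -
  assume i: "i \<in> I"
  have "\<And>t. t < T \<Longrightarrow> E i t \<in> borel_measurable (F T)" "\<And>t. t < T \<Longrightarrow> \<xi>s i t \<in> borel_measurable (F T)"
    "\<And>t. t \<le> T \<Longrightarrow> \<theta>s i t \<in> borel_measurable (F T)"
    using measurable_F_mono E_adapted[OF i] \<xi>s_adapted[OF i] \<theta>s_adapted[OF i] by (meson less_imp_le order_refl)+
  then show ?thesis unfolding uncovered_def using \<gamma>_meas[OF i]
    by (intro borel_measurable_diff borel_measurable_sum) auto
qed

text \<open>Buying \<open>H\<close> extra allowances at time \<open>T\<close>.\<close>

lemma terminal_trade_deviation: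
  assumes i: "i \<in> I" and H: "H \<in> borel_measurable (F T)"
    and nonneg: "AE \<omega> in M. 0 \<le> - H \<omega> * A T \<omega> - \<pi> * (max 0 (uncovered i \<omega> - H \<omega>) - max 0 (uncovered i \<omega>))"
  shows "AE \<omega> in M. - H \<omega> * A T \<omega> - \<pi> * (max 0 (uncovered i \<omega> - H \<omega>) - max 0 (uncovered i \<omega>)) = 0"
proof (rule nonneg_gain_AE_zero[OF i _ _ nonneg])
  define \<theta> where "\<theta> r \<omega> = \<theta>s i r \<omega> + (if r = T then H \<omega> else 0)" for r \<omega>
  show "admissible M F T (E i) \<theta> (\<xi>s i)"
    unfolding admissible_def
  proof (intro conjI allI impI)
    fix r assume "r \<le> T"
    then show "\<theta> r \<in> borel_measurable (F r)"
      using \<theta>s_adapted[OF i] H unfolding \<theta>_def by (cases "r = T") auto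
  qed (use eq_adm[OF i] in \<open>auto simp: admissible_def\<close>)
  fix \<omega>
  have "(\<Sum>t<T. \<theta> t \<omega> * A t \<omega> + C i t (\<xi>s i t \<omega>) \<omega>) = (\<Sum>t<T. \<theta>s i t \<omega> * A t \<omega> + C i t (\<xi>s i t \<omega>) \<omega>)"
    "(\<Sum>t<T. E i t \<omega> - \<xi>s i t \<omega> - \<theta> t \<omega>) = (\<Sum>t<T. E i t \<omega> - \<xi>s i t \<omega> - \<theta>s i t \<omega>)"
    by (auto simp: \<theta>_def intro!: sum.cong)
  then show "L i \<theta> (\<xi>s i) \<omega> = L i (\<theta>s i) (\<xi>s i) \<omega> +
      (- H \<omega> * A T \<omega> - \<pi> * (max 0 (uncovered i \<omega> - H \<omega>) - max 0 (uncovered i \<omega>)))"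
    unfolding wealth_def uncovered_def by (simp add: \<theta>_def algebra_simps)
qed

text \<open>Buying \<open>H\<close> allowances at time \<open>t\<close> and selling them again at time \<open>s\<close>.\<close>

lemma round_trip_deviation:
  assumes i: "i \<in> I" and ts: "t < s" "s \<le> T" and H: "H \<in> borel_measurable (F t)"
    and nonneg: "AE \<omega> in M. 0 \<le> H \<omega> * (A s \<omega> - A t \<omega>)"
  shows "AE \<omega> in M. H \<omega> * (A s \<omega> - A t \<omega>) = 0"
proof (rule nonneg_gain_AE_zero[OF i _ _ nonneg])
  define \<theta> where "\<theta> r \<omega> = \<theta>s i r \<omega> + (if r = t then H \<omega> else 0) - (if r = s then H \<omega> else 0)" for r \<omega>
  have "H \<in> borel_measurable (F s)"
    using measurable_F_mono[OF H] ts by simp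
  then show "admissible M F T (E i) \<theta> (\<xi>s i)"
    unfolding admissible_def
  proof (intro conjI allI impI)
    fix r assume "r \<le> T"
    then show "\<theta> r \<in> borel_measurable (F r)"
      using \<open>H \<in> borel_measurable (F s)\<close> \<theta>s_adapted[OF i] H unfolding \<theta>_def
      by (cases "r = t"; cases "r = s") auto
  qed (use eq_adm[OF i] in \<open>auto simp: admissible_def\<close>)
  fix \<omega>
  show "L i \<theta> (\<xi>s i) \<omega> = L i (\<theta>s i) (\<xi>s i) \<omega> + H \<omega> * (A s \<omega> - A t \<omega>)"
  proof (cases "s = T")
    case True
    have "(\<Sum>r<T. \<theta> r \<omega> * A r \<omega> + C i r (\<xi>s i r \<omega>) \<omega>) = (\<Sum>r<T. \<theta>s i r \<omega> * A r \<omega> + C i r (\<xi>s i r \<omega>) \<omega>) + H \<omega> * A t \<omega>"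
      by (subst sum_eq_except_one[where t=t]) (use ts True in \<open>auto simp: \<theta>_def algebra_simps\<close>)
    moreover have "(\<Sum>r<T. E i r \<omega> - \<xi>s i r \<omega> - \<theta> r \<omega>) = (\<Sum>r<T. E i r \<omega> - \<xi>s i r \<omega> - \<theta>s i r \<omega>) - H \<omega>"
      by (subst sum_eq_except_one[where t=t]) (use ts True in \<open>auto simp: \<theta>_def\<close>)
    ultimately show ?thesis
      unfolding wealth_def using ts True by (simp add: \<theta>_def algebra_simps)
  next
    case False
    then have "s < T" using ts by simp
    have "(\<Sum>r<T. \<theta> r \<omega> * A r \<omega> + C i r (\<xi>s i r \<omega>) \<omega>)
        = (\<Sum>r<T. \<theta>s i r \<omega> * A r \<omega> + C i r (\<xi>s i r \<omega>) \<omega>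
            + (if r = t then H \<omega> * A t \<omega> else 0) - (if r = s then H \<omega> * A s \<omega> else 0))"
      by (intro sum.cong) (auto simp: \<theta>_def algebra_simps)
    also have "\<dots> = (\<Sum>r<T. \<theta>s i r \<omega> * A r \<omega> + C i r (\<xi>s i r \<omega>) \<omega>) + H \<omega> * A t \<omega> - H \<omega> * A s \<omega>"
      using ts \<open>s < T\<close> by (simp add: sum.distrib sum_subtractf)
    finally have trades: "(\<Sum>r<T. \<theta> r \<omega> * A r \<omega> + C i r (\<xi>s i r \<omega>) \<omega>)
        = (\<Sum>r<T. \<theta>s i r \<omega> * A r \<omega> + C i r (\<xi>s i r \<omega>) \<omega>) + H \<omega> * A t \<omega> - H \<omega> * A s \<omega>" .
    have "(\<Sum>r<T. E i r \<omega> - \<xi>s i r \<omega> - \<theta> r \<omega>)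
        = (\<Sum>r<T. E i r \<omega> - \<xi>s i r \<omega> - \<theta>s i r \<omega> - (if r = t then H \<omega> else 0) + (if r = s then H \<omega> else 0))"
      by (intro sum.cong) (auto simp: \<theta>_def algebra_simps)
    also have "\<dots> = (\<Sum>r<T. E i r \<omega> - \<xi>s i r \<omega> - \<theta>s i r \<omega>)"
      using ts \<open>s < T\<close> by (simp add: sum.distrib sum_subtractf)
    finally show ?thesis
      unfolding wealth_def trades using ts \<open>s < T\<close> by (simp add: \<theta>_def algebra_simps)
  qed
qed

text \<open>Abating \<open>X\<close> instead of \<open>\<xi>s i t\<close> in period \<open>t\<close>, trading the difference at time \<open>t\<close>.\<close>

lemma abatement_deviation:
  assumes i: "i \<in> I" and t: "t < T" and X: "X \<in> borel_measurable (F t)"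
    and X_bounds: "\<And>\<omega>. \<omega> \<in> space M \<Longrightarrow> 0 \<le> X \<omega> \<and> X \<omega> \<le> E i t \<omega>"
    and nonneg: "AE \<omega> in M. 0 \<le> (C i t (\<xi>s i t \<omega>) \<omega> - A t \<omega> * \<xi>s i t \<omega>) - (C i t (X \<omega>) \<omega> - A t \<omega> * X \<omega>)"
  shows "AE \<omega> in M. (C i t (\<xi>s i t \<omega>) \<omega> - A t \<omega> * \<xi>s i t \<omega>) - (C i t (X \<omega>) \<omega> - A t \<omega> * X \<omega>) = 0"
proof (rule nonneg_gain_AE_zero[OF i _ _ nonneg])
  define \<theta> where "\<theta> r \<omega> = \<theta>s i r \<omega> + (if r = t then \<xi>s i t \<omega> - X \<omega> else 0)" for r \<omega>
  define \<xi> where "\<xi> r \<omega> = (if r = t then X \<omega> else \<xi>s i r \<omega>)" for r \<omega>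
  show "admissible M F T (E i) \<theta> \<xi>"
    unfolding admissible_def
  proof (intro conjI allI impI ballI)
    fix r assume "r \<le> T"
    then show "\<theta> r \<in> borel_measurable (F r)"
      using \<theta>s_adapted[OF i] \<xi>s_adapted[OF i t] X unfolding \<theta>_def by (cases "r = t") auto
  next
    fix r assume r: "r < T"
    then show "\<xi> r \<in> borel_measurable (F r)"
      using \<xi>s_adapted[OF i r] X unfolding \<xi>_def by (cases "r = t") auto
    fix \<omega> assume "\<omega> \<in> space M"
    then show "0 \<le> \<xi> r \<omega>" "\<xi> r \<omega> \<le> E i r \<omega>"
      using \<xi>s_bounds[OF i r] X_bounds unfolding \<xi>_def by auto
  qed
  fix \<omega>
  have "(\<Sum>r<T. \<theta> r \<omega> * A r \<omega> + C i r (\<xi> r \<omega>) \<omega>) = (\<Sum>r<T. \<theta>s i r \<omega> * A r \<omega> + C i r (\<xi>s i r \<omega>) \<omega>)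
      + ((\<xi>s i t \<omega> - X \<omega>) * A t \<omega> + C i t (X \<omega>) \<omega> - C i t (\<xi>s i t \<omega>) \<omega>)"
    by (subst sum_eq_except_one[where t=t]) (use t in \<open>auto simp: \<theta>_def \<xi>_def algebra_simps\<close>)
  moreover have "(\<Sum>r<T. E i r \<omega> - \<xi> r \<omega> - \<theta> r \<omega>) = (\<Sum>r<T. E i r \<omega> - \<xi>s i r \<omega> - \<theta>s i r \<omega>)"
    by (subst sum_eq_except_one[where t=t]) (use t in \<open>auto simp: \<theta>_def \<xi>_def\<close>)
  ultimately show "L i \<theta> \<xi> \<omega> = L i (\<theta>s i) (\<xi>s i) \<omega> +
      ((C i t (\<xi>s i t \<omega>) \<omega> - A t \<omega> * \<xi>s i t \<omega>) - (C i t (X \<omega>) \<omega> - A t \<omega> * X \<omega>))"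
    unfolding wealth_def using t by (simp add: \<theta>_def algebra_simps)
qed

lemma aggregate_allocation_measurable: "(\<lambda>\<omega>. \<Sum>i\<in>I. \<gamma> i \<omega>) \<in> borel_measurable M"
  using \<gamma>_meas measurable_F_M by (intro borel_measurable_sum) blast

lemma aggregate_allocation_AE_neq:
  assumes "X \<in> borel_measurable (F (T - 1))"
  shows "AE \<omega> in M. (\<Sum>i\<in>I. \<gamma> i \<omega>) \<noteq> X \<omega>"
  by (rule cond_distr_no_atoms_AE_neq[OF prob_space_axioms subalgebra_F \<gamma>_no_atoms
        aggregate_allocation_measurable assms]) simp

lemma I_nonempty: "I \<noteq> {}"
proof
  assume "I = {}"
  then have "AE \<omega> in M. False"
    using aggregate_allocation_AE_neq[of "\<lambda>_. 0"] by simp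
  then show False
    using AE_False by blast
qed

lemma terminal_price_le_penalty: "AE \<omega> in M. A T \<omega> \<le> \<pi>"
proof -
  obtain i where i: "i \<in> I" using I_nonempty by blast
  define B where "B = {\<omega>\<in>space M. \<pi> < A T \<omega>}"
  have B: "B \<in> sets (F T)"
    unfolding B_def using A_adapted[OF order_refl] by (subst space_F[symmetric, of T]) (simp, measurable)
  define H :: "'a \<Rightarrow> real" where "H \<omega> = - indicator B \<omega>" for \<omega>
  have gain_pos: "0 < - H \<omega> * A T \<omega> - \<pi> * (max 0 (uncovered i \<omega> - H \<omega>) - max 0 (uncovered i \<omega>))"
    if "\<omega> \<in> B" for \<omega>
  proof -
    have "\<pi> * (max 0 (uncovered i \<omega> + 1) - max 0 (uncovered i \<omega>)) \<le> \<pi>"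
      using pi_pos by (simp add: mult_left_le)
    then show ?thesis using that unfolding H_def B_def by simp
  qed
  have "AE \<omega> in M. - H \<omega> * A T \<omega> - \<pi> * (max 0 (uncovered i \<omega> - H \<omega>) - max 0 (uncovered i \<omega>)) = 0"
    using B by (intro terminal_trade_deviation[OF i] AE_I2)
      (use gain_pos in \<open>auto simp: H_def split: split_indicator intro: less_imp_le\<close>)
  from this AE_space show ?thesis
    by eventually_elim (use gain_pos in \<open>force simp: B_def\<close>)
qed

lemma terminal_price_nonneg: "AE \<omega> in M. 0 \<le> A T \<omega>"
proof -
  obtain i where i: "i \<in> I" using I_nonempty by blast
  define B where "B = {\<omega>\<in>space M. A T \<omega> < 0}"
  have B: "B \<in> sets (F T)"
    unfolding B_def using A_adapted[OF order_refl] by (subst space_F[symmetric, of T]) (simp, measurable)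
  define H :: "'a \<Rightarrow> real" where "H \<omega> = indicator B \<omega>" for \<omega>
  have gain_pos: "0 < - H \<omega> * A T \<omega> - \<pi> * (max 0 (uncovered i \<omega> - H \<omega>) - max 0 (uncovered i \<omega>))"
    if "\<omega> \<in> B" for \<omega>
  proof -
    have "\<pi> * (max 0 (uncovered i \<omega> - 1) - max 0 (uncovered i \<omega>)) \<le> 0"
      using pi_pos by (simp add: mult_nonneg_nonpos)
    then show ?thesis using that unfolding H_def B_def by simp
  qed
  have "AE \<omega> in M. - H \<omega> * A T \<omega> - \<pi> * (max 0 (uncovered i \<omega> - H \<omega>) - max 0 (uncovered i \<omega>)) = 0"
    using B by (intro terminal_trade_deviation[OF i] AE_I2)
      (use gain_pos in \<open>auto simp: H_def split: split_indicator intro: less_imp_le\<close>)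
  from this AE_space show ?thesis
    by eventually_elim (use gain_pos in \<open>force simp: B_def\<close>)
qed

lemma price_bounds:
  assumes t: "t \<le> T"
  shows "AE \<omega> in M. 0 \<le> A t \<omega> \<and> A t \<omega> \<le> \<pi>"
proof (cases "t = T")
  case True
  have "AE \<omega> in M. 0 \<le> A T \<omega> \<and> A T \<omega> \<le> \<pi>"
    using terminal_price_nonneg terminal_price_le_penalty by eventually_elim auto
  with True show ?thesis by simp
next
  case False
  with t have t: "t < T" by simp
  obtain i where i: "i \<in> I" using I_nonempty by blast
  \<comment> \<open>buy where \<open>A t < 0\<close>, sell where \<open>A t > \<pi>\<close>, and unwind at \<open>T\<close>\<close>
  define B where "B = {\<omega>\<in>space M. A t \<omega> < 0}"
  define B' where "B' = {\<omega>\<in>space M. \<pi> < A t \<omega>}"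
  have "B \<in> sets (F t)"
    unfolding B_def using A_adapted[OF less_imp_le[OF t]] t by (subst space_F[symmetric, of t]) (simp, measurable)
  moreover have "B' \<in> sets (F t)"
    unfolding B'_def using A_adapted[OF less_imp_le[OF t]] t by (subst space_F[symmetric, of t]) (simp, measurable)
  ultimately have H: "(\<lambda>\<omega>. indicator B \<omega> - indicator B' \<omega> :: real) \<in> borel_measurable (F t)"
    by simp
  have "AE \<omega> in M. 0 \<le> (indicator B \<omega> - indicator B' \<omega>) * (A T \<omega> - A t \<omega>)"
    using terminal_price_nonneg terminal_price_le_penalty
    by eventually_elim (auto simp: B_def B'_def indicator_def)
  from round_trip_deviation[OF i t order_refl H this] terminal_price_nonneg terminal_price_le_penalty AE_space
  show ?thesis
    by eventually_elim (use pi_pos in \<open>auto simp: B_def B'_def split: split_indicator split_indicator_asm\<close>)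
qed

lemma no_arbitrage_step:
  assumes t: "t < T" and B: "B \<in> sets (F t)"
  shows "(AE \<omega> in M. \<omega> \<in> B \<longrightarrow> A t \<omega> \<le> A (Suc t) \<omega>) \<Longrightarrow> (AE \<omega> in M. \<omega> \<in> B \<longrightarrow> A (Suc t) \<omega> = A t \<omega>)"
    and "(AE \<omega> in M. \<omega> \<in> B \<longrightarrow> A (Suc t) \<omega> \<le> A t \<omega>) \<Longrightarrow> (AE \<omega> in M. \<omega> \<in> B \<longrightarrow> A (Suc t) \<omega> = A t \<omega>)"
proof -
  obtain i where i: "i \<in> I" using I_nonempty by blast
  have ts: "t < Suc t" "Suc t \<le> T" using t by auto
  have H: "(\<lambda>\<omega>. indicator B \<omega> :: real) \<in> borel_measurable (F t)"
    "(\<lambda>\<omega>. - indicator B \<omega> :: real) \<in> borel_measurable (F t)"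
    using B by simp_all
  show "AE \<omega> in M. \<omega> \<in> B \<longrightarrow> A (Suc t) \<omega> = A t \<omega>" if "AE \<omega> in M. \<omega> \<in> B \<longrightarrow> A t \<omega> \<le> A (Suc t) \<omega>"
  proof -
    have "AE \<omega> in M. 0 \<le> indicator B \<omega> * (A (Suc t) \<omega> - A t \<omega>)"
      using that by eventually_elim (auto simp: indicator_def)
    from round_trip_deviation[OF i ts H(1) this] show ?thesis
      by eventually_elim (auto simp: indicator_def)
  qed
  show "AE \<omega> in M. \<omega> \<in> B \<longrightarrow> A (Suc t) \<omega> = A t \<omega>" if "AE \<omega> in M. \<omega> \<in> B \<longrightarrow> A (Suc t) \<omega> \<le> A t \<omega>"
  proof -
    have "AE \<omega> in M. 0 \<le> - indicator B \<omega> * (A (Suc t) \<omega> - A t \<omega>)"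
      using that by eventually_elim (auto simp: indicator_def)
    from round_trip_deviation[OF i ts H(2) this] show ?thesis
      by eventually_elim (auto simp: indicator_def)
  qed
qed

lemma optimal_abatement_AE_le:
  assumes i: "i \<in> I" and t: "t < T" and Y[measurable]: "Y \<in> borel_measurable (F t)"
    and Y_bounds: "\<And>\<omega>. \<omega> \<in> space M \<Longrightarrow> 0 \<le> Y \<omega> \<and> Y \<omega> \<le> E i t \<omega>"
  shows "AE \<omega> in M. C i t (\<xi>s i t \<omega>) \<omega> - A t \<omega> * \<xi>s i t \<omega> \<le> C i t (Y \<omega>) \<omega> - A t \<omega> * Y \<omega>"
proof -
  define net where "net x \<omega> = C i t x \<omega> - A t \<omega> * x" for x \<omega>
  have [measurable]: "A t \<in> borel_measurable (F t)" "\<xi>s i t \<in> borel_measurable (F t)"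
    using A_adapted \<xi>s_adapted[OF i t] t by auto
  have [measurable]: "(\<lambda>\<omega>. C i t (\<xi>s i t \<omega>) \<omega>) \<in> borel_measurable (F t)"
    "(\<lambda>\<omega>. C i t (Y \<omega>) \<omega>) \<in> borel_measurable (F t)"
    using \<xi>s_bounds[OF i t] Y_bounds by (auto intro!: measurable_cost[OF i t])
  \<comment> \<open>abate \<open>Y\<close> instead wherever this is strictly cheaper\<close>
  define B where "B = {\<omega>\<in>space M. net (Y \<omega>) \<omega> < net (\<xi>s i t \<omega>) \<omega>}"
  have B: "B \<in> sets (F t)"
    unfolding B_def net_def using t by (subst space_F[symmetric, of t]) (simp, measurable)
  define X where "X \<omega> = (if \<omega> \<in> B then Y \<omega> else \<xi>s i t \<omega>)" for \<omega>
  have X: "X \<in> borel_measurable (F t)"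
    unfolding X_def using B by (intro measurable_If_set) auto
  have X_bounds: "0 \<le> X \<omega> \<and> X \<omega> \<le> E i t \<omega>" if "\<omega> \<in> space M" for \<omega>
    using \<xi>s_bounds[OF i t that] Y_bounds[OF that] unfolding X_def by auto
  have gain: "net (\<xi>s i t \<omega>) \<omega> - net (X \<omega>) \<omega>
      = (if \<omega> \<in> B then net (\<xi>s i t \<omega>) \<omega> - net (Y \<omega>) \<omega> else 0)" for \<omega>
    unfolding X_def by simp
  have "AE \<omega> in M. net (\<xi>s i t \<omega>) \<omega> - net (X \<omega>) \<omega> = 0"
    unfolding net_def by (rule abatement_deviation[OF i t X X_bounds], assumption, rule AE_I2)
      (auto simp: gain[unfolded net_def] B_def net_def)
  from this AE_space have "AE \<omega> in M. net (\<xi>s i t \<omega>) \<omega> \<le> net (Y \<omega>) \<omega>"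
    by eventually_elim (auto simp: gain B_def split: if_splits)
  then show ?thesis
    unfolding net_def .
qed

lemma optimal_abatement:
  assumes i: "i \<in> I" and t: "t < T"
  shows "AE \<omega> in M. \<xi>s i t \<omega> = abatement (C i t) (E i t) (A t \<omega>) \<omega>"
proof -
  define net where "net x \<omega> = C i t x \<omega> - A t \<omega> * x" for x \<omega>
  have rational: "AE \<omega> in M. net (\<xi>s i t \<omega>) \<omega> \<le> net (r * E i t \<omega>) \<omega>"
    if "r \<in> {r\<in>\<rat>. 0 \<le> r \<and> r \<le> 1}" for r
    unfolding net_def using that E_adapted[OF i t] E_nonneg[OF i t]
    by (intro optimal_abatement_AE_le[OF i t]) (auto intro: mult_left_le_one_le)
  have countable: "countable {r\<in>\<rat>. 0 \<le> r \<and> r \<le> 1}"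
    by (rule countable_subset[OF _ countable_rat]) auto
  have "AE \<omega> in M. \<forall>r\<in>{r\<in>\<rat>. 0 \<le> r \<and> r \<le> 1}. net (\<xi>s i t \<omega>) \<omega> \<le> net (r * E i t \<omega>) \<omega>"
    by (rule AE_ball_countable'[OF rational countable])
  from this AE_space show ?thesis
  proof eventually_elim
    case (elim \<omega>)
    have "continuous_on {0..E i t \<omega>} (\<lambda>x. net x \<omega>)"
      unfolding net_def using C_cont[OF i t elim(2)]
      by (intro continuous_intros) (auto elim: continuous_on_subset)
    then have "\<forall>y\<in>{0..E i t \<omega>}. net (\<xi>s i t \<omega>) \<omega> \<le> net y \<omega>"
      using ge_on_interval_if_ge_on_rational_points[of "E i t \<omega>" "\<lambda>x. net x \<omega>"]
        E_nonneg[OF i t elim(2)] elim(1) by auto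
    then show ?case
      using abatement_eqI[where C="C i t" and E="E i t" and \<omega>=\<omega>, OF C_strict_convex[OF i t elim(2)]]
        \<xi>s_bounds[OF i t elim(2)]
      unfolding net_def by (simp add: mult.commute)
  qed
qed

lemma covered_if_price_below_penalty:
  assumes i: "i \<in> I"
  shows "AE \<omega> in M. A T \<omega> < \<pi> \<longrightarrow> uncovered i \<omega> \<le> 0"
proof -
  define B where "B = {\<omega>\<in>space M. A T \<omega> < \<pi>}"
  have B: "B \<in> sets (F T)"
    unfolding B_def using A_adapted[OF order_refl] by (subst space_F[symmetric, of T]) (simp, measurable)
  \<comment> \<open>where allowances are cheaper than the penalty, buy enough of them to cover all emissions\<close>
  define H :: "'a \<Rightarrow> real" where "H \<omega> = indicator B \<omega> * max 0 (uncovered i \<omega>)" for \<omega>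
  have H: "H \<in> borel_measurable (F T)"
    unfolding H_def using B uncovered_measurable[OF i] by simp
  have gain: "- H \<omega> * A T \<omega> - \<pi> * (max 0 (uncovered i \<omega> - H \<omega>) - max 0 (uncovered i \<omega>))
      = indicator B \<omega> * max 0 (uncovered i \<omega>) * (\<pi> - A T \<omega>)" for \<omega>
    unfolding H_def by (cases "\<omega> \<in> B"; cases "uncovered i \<omega> \<ge> 0") (auto simp: algebra_simps)
  have gain_nonneg: "0 \<le> - H \<omega> * A T \<omega> - \<pi> * (max 0 (uncovered i \<omega> - H \<omega>) - max 0 (uncovered i \<omega>))" for \<omega>
    unfolding gain B_def by (cases "A T \<omega> < \<pi>") auto
  have "AE \<omega> in M. - H \<omega> * A T \<omega> - \<pi> * (max 0 (uncovered i \<omega> - H \<omega>) - max 0 (uncovered i \<omega>)) = 0"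
    by (rule terminal_trade_deviation[OF i H], rule AE_I2, rule gain_nonneg)
  from this AE_space show ?thesis
    unfolding gain B_def by eventually_elim (auto simp: max_def split: if_splits)
qed

lemma uncovered_nonneg_if_price_pos:
  assumes i: "i \<in> I"
  shows "AE \<omega> in M. 0 < A T \<omega> \<longrightarrow> 0 \<le> uncovered i \<omega>"
proof -
  define B where "B = {\<omega>\<in>space M. 0 < A T \<omega>}"
  have B: "B \<in> sets (F T)"
    unfolding B_def using A_adapted[OF order_refl] by (subst space_F[symmetric, of T]) (simp, measurable)
  \<comment> \<open>where allowances have positive value, sell the ones that are not needed\<close>
  define H :: "'a \<Rightarrow> real" where "H \<omega> = - indicator B \<omega> * max 0 (- uncovered i \<omega>)" for \<omega>
  have H: "H \<in> borel_measurable (F T)"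
    unfolding H_def using B uncovered_measurable[OF i] by simp
  have gain: "- H \<omega> * A T \<omega> - \<pi> * (max 0 (uncovered i \<omega> - H \<omega>) - max 0 (uncovered i \<omega>))
      = indicator B \<omega> * max 0 (- uncovered i \<omega>) * A T \<omega>" for \<omega>
    unfolding H_def by (cases "\<omega> \<in> B"; cases "uncovered i \<omega> \<ge> 0") (auto simp: algebra_simps)
  have gain_nonneg: "0 \<le> - H \<omega> * A T \<omega> - \<pi> * (max 0 (uncovered i \<omega> - H \<omega>) - max 0 (uncovered i \<omega>))" for \<omega>
    unfolding gain B_def by (cases "0 < A T \<omega>") auto
  have "AE \<omega> in M. - H \<omega> * A T \<omega> - \<pi> * (max 0 (uncovered i \<omega> - H \<omega>) - max 0 (uncovered i \<omega>)) = 0"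
    by (rule terminal_trade_deviation[OF i H], rule AE_I2, rule gain_nonneg)
  from this AE_space show ?thesis
    unfolding gain B_def by eventually_elim (auto simp: max_def split: if_splits)
qed

definition aggregate_excess :: "'a \<Rightarrow> real" where
  "aggregate_excess \<omega> = (\<Sum>i\<in>I. (\<Sum>t<T. E i t \<omega> - \<xi>s i t \<omega>) - \<gamma> i \<omega>)"

lemma sum_uncovered:
  assumes "\<omega> \<in> space M"
  shows "(\<Sum>i\<in>I. uncovered i \<omega>) = aggregate_excess \<omega>"
proof -
  have "(\<Sum>i\<in>I. uncovered i \<omega>)
      = (\<Sum>i\<in>I. ((\<Sum>t<T. E i t \<omega> - \<xi>s i t \<omega>) - \<gamma> i \<omega>) - (\<Sum>t<T. \<theta>s i t \<omega>) - \<theta>s i T \<omega>)"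
    unfolding uncovered_def by (intro sum.cong refl) (simp add: sum_subtractf)
  also have "\<dots> = aggregate_excess \<omega> - (\<Sum>t<T. \<Sum>i\<in>I. \<theta>s i t \<omega>) - (\<Sum>i\<in>I. \<theta>s i T \<omega>)"
    unfolding aggregate_excess_def by (simp add: sum_subtractf sum.swap[of _ I])
  also have "\<dots> = aggregate_excess \<omega>"
    using eq_clear assms by simp
  finally show ?thesis .
qed

lemma aggregate_excess_AE_nonzero: "AE \<omega> in M. aggregate_excess \<omega> \<noteq> 0"
proof -
  define X where "X \<omega> = (\<Sum>i\<in>I. \<Sum>t<T. E i t \<omega> - \<xi>s i t \<omega>)" for \<omega>
  have "X \<in> borel_measurable (F (T - 1))"
    unfolding X_def
  proof (intro borel_measurable_sum borel_measurable_diff)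
    fix i t assume "i \<in> I" "t \<in> {..<T}"
    then show "E i t \<in> borel_measurable (F (T - 1))" "\<xi>s i t \<in> borel_measurable (F (T - 1))"
      using measurable_F_mono[OF E_adapted] measurable_F_mono[OF \<xi>s_adapted] by auto
  qed
  from aggregate_allocation_AE_neq[OF this] show ?thesis
    unfolding aggregate_excess_def X_def by eventually_elim (simp add: sum_subtractf)
qed

lemma terminal_price:
  "AE \<omega> in M. A T \<omega> = (if aggregate_excess \<omega> \<ge> 0 then \<pi> else 0)"
proof -
  have I: "countable I" using I_fin by (rule countable_finite)
  have "AE \<omega> in M. \<forall>i\<in>I. A T \<omega> < \<pi> \<longrightarrow> uncovered i \<omega> \<le> 0"
    by (rule AE_ball_countable'[OF covered_if_price_below_penalty I])
  moreover have "AE \<omega> in M. \<forall>i\<in>I. 0 < A T \<omega> \<longrightarrow> 0 \<le> uncovered i \<omega>"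
    by (rule AE_ball_countable'[OF uncovered_nonneg_if_price_pos I])
  moreover note aggregate_excess_AE_nonzero price_bounds[OF order_refl] AE_space
  ultimately show ?thesis
  proof eventually_elim
    case (elim \<omega>)
    note covered = elim(1) and uncovered_nonneg = elim(2) and nonzero = elim(3) and bounds = elim(4)
    show ?case
    proof (cases "aggregate_excess \<omega> \<ge> 0")
      case True
      have "\<not> A T \<omega> < \<pi>"
      proof
        assume "A T \<omega> < \<pi>"
        then have "(\<Sum>i\<in>I. uncovered i \<omega>) \<le> 0"
          using covered by (intro sum_nonpos) auto
        then show False
          using sum_uncovered[OF elim(5)] True nonzero by simp
      qed
      then show ?thesis using True bounds by simp
    next
      case False
      have "\<not> 0 < A T \<omega>"
      proof
        assume "0 < A T \<omega>"
        then have "0 \<le> (\<Sum>i\<in>I. uncovered i \<omega>)"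
          using uncovered_nonneg by (intro sum_nonneg) auto
        then show False
          using sum_uncovered[OF elim(5)] False by simp
      qed
      then show ?thesis using False bounds by simp
    qed
  qed
qed

lemma equivalent_martingale_measure: "\<exists>Q. equiv_prob Q M \<and> martingale_on Q F T A"
proof -
  \<comment> \<open>a version of \<open>A\<close> that is bounded everywhere, not only almost surely\<close>
  define A' where "A' t \<omega> = max 0 (min \<pi> (A t \<omega>))" for t \<omega>
  have A'_adapted: "t \<le> T \<Longrightarrow> A' t \<in> borel_measurable (F t)" for t
    unfolding A'_def using A_adapted by measurable
  have A'_bounds: "0 \<le> A' t \<omega> \<and> A' t \<omega> \<le> \<pi>" for t \<omega>
    unfolding A'_def using pi_pos by auto
  have A'_eq: "AE \<omega> in M. A t \<omega> = A' t \<omega>" if "t \<le> T" for t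
    using price_bounds[OF that] unfolding A'_def by eventually_elim auto
  have A'_step_eq: "k < T \<Longrightarrow> AE \<omega> in M. A k \<omega> = A' k \<omega> \<and> A (Suc k) \<omega> = A' (Suc k) \<omega>" for k
    using A'_eq[of k] A'_eq[of "Suc k"] by (auto elim: eventually_rev_mp eventually_mono)
  have "\<exists>Q. equiv_prob Q M \<and> martingale_on Q F T A'"
  proof (rule bounded_no_arbitrage_equivalent_martingale_measure[OF A'_adapted A'_bounds])
    fix k B assume k: "k < T" and B: "B \<in> sets (F k)"
    show "AE \<omega> in M. \<omega> \<in> B \<longrightarrow> A' (Suc k) \<omega> = A' k \<omega>"
      if "AE \<omega> in M. \<omega> \<in> B \<longrightarrow> A' k \<omega> \<le> A' (Suc k) \<omega>"
    proof -
      have "AE \<omega> in M. \<omega> \<in> B \<longrightarrow> A k \<omega> \<le> A (Suc k) \<omega>"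
        using that A'_step_eq[OF k] by eventually_elim auto
      from no_arbitrage_step(1)[OF k B this] A'_step_eq[OF k] show ?thesis
        by eventually_elim auto
    qed
    show "AE \<omega> in M. \<omega> \<in> B \<longrightarrow> A' (Suc k) \<omega> = A' k \<omega>"
      if "AE \<omega> in M. \<omega> \<in> B \<longrightarrow> A' (Suc k) \<omega> \<le> A' k \<omega>"
    proof -
      have "AE \<omega> in M. \<omega> \<in> B \<longrightarrow> A (Suc k) \<omega> \<le> A k \<omega>"
        using that A'_step_eq[OF k] by eventually_elim auto
      from no_arbitrage_step(2)[OF k B this] A'_step_eq[OF k] show ?thesis
        by eventually_elim auto
    qed
  qed
  then show ?thesis
    using martingale_on_AE_cong[OF _ _ A_adapted A'_eq] by blast
qed

end

theorem proposition1:
  fixes M :: "'a measure" and F :: "nat \<Rightarrow> 'a measure" and T :: nat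
    and I :: "'i set"
    and E :: "'i \<Rightarrow> nat \<Rightarrow> 'a \<Rightarrow> real"
    and C :: "'i \<Rightarrow> nat \<Rightarrow> real \<Rightarrow> 'a \<Rightarrow> real"
    and \<pi> :: real and \<gamma> :: "'i \<Rightarrow> 'a \<Rightarrow> real"
    and U :: "'i \<Rightarrow> real \<Rightarrow> real"
    and A :: "nat \<Rightarrow> 'a \<Rightarrow> real"
    and \<theta>s :: "'i \<Rightarrow> nat \<Rightarrow> 'a \<Rightarrow> real" and \<xi>s :: "'i \<Rightarrow> nat \<Rightarrow> 'a \<Rightarrow> real"
  assumes P: "prob_space M"
    and filt: "filtration_on M F T"
    and F0_trivial: "sets (F 0) = {{}, space M}"
    and I_fin: "finite I"
    and E_adapted: "\<And>i t. i \<in> I \<Longrightarrow> t < T \<Longrightarrow> E i t \<in> borel_measurable (F t)"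
    and E_nonneg: "\<And>i t \<omega>. i \<in> I \<Longrightarrow> t < T \<Longrightarrow> \<omega> \<in> space M \<Longrightarrow> 0 \<le> E i t \<omega>"
    and C_meas: "\<And>i t. i \<in> I \<Longrightarrow> t < T \<Longrightarrow>
        (\<lambda>(x, \<omega>). C i t x \<omega>) \<in> borel_measurable (restrict_space borel {0::real..} \<Otimes>\<^sub>M F t)"
    and C_strict_convex: "\<And>i t \<omega>. i \<in> I \<Longrightarrow> t < T \<Longrightarrow> \<omega> \<in> space M \<Longrightarrow>
        strict_convex_on {0..} (\<lambda>x. C i t x \<omega>)"
    and C_cont: "\<And>i t \<omega>. i \<in> I \<Longrightarrow> t < T \<Longrightarrow> \<omega> \<in> space M \<Longrightarrow>
        continuous_on {0..} (\<lambda>x. C i t x \<omega>)"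
    and C_zero: "\<And>i t \<omega>. i \<in> I \<Longrightarrow> t < T \<Longrightarrow> \<omega> \<in> space M \<Longrightarrow> C i t 0 \<omega> = 0"
    and pi_pos: "\<pi> > 0"
    and \<gamma>_meas: "\<And>i. i \<in> I \<Longrightarrow> \<gamma> i \<in> borel_measurable (F T)"
    and \<gamma>_no_atoms: "cond_distr_no_atoms M (F (T - 1)) (\<lambda>\<omega>. \<Sum>i\<in>I. \<gamma> i \<omega>)"
    and U_cont: "\<And>i. i \<in> I \<Longrightarrow> continuous_on UNIV (U i)"
    and U_mono: "\<And>i. i \<in> I \<Longrightarrow> strict_mono (U i)"
    and U_concave: "\<And>i. i \<in> I \<Longrightarrow> concave_on UNIV (U i)"
    and A_adapted: "\<And>t. t \<le> T \<Longrightarrow> A t \<in> borel_measurable (F t)"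
    and eq_adm: "\<And>i. i \<in> I \<Longrightarrow> admissible M F T (E i) (\<theta>s i) (\<xi>s i)"
    and eq_finite: "\<And>i. i \<in> I \<Longrightarrow>
        util_exists M (\<lambda>\<omega>. U i (wealth T \<pi> A (C i) (E i) (\<gamma> i) (\<theta>s i) (\<xi>s i) \<omega>)) \<and>
        \<bar>util_val M (\<lambda>\<omega>. U i (wealth T \<pi> A (C i) (E i) (\<gamma> i) (\<theta>s i) (\<xi>s i) \<omega>))\<bar> \<noteq> \<infinity>"
    and eq_clear: "\<And>t \<omega>. t \<le> T \<Longrightarrow> \<omega> \<in> space M \<Longrightarrow> (\<Sum>i\<in>I. \<theta>s i t \<omega>) = 0"
    and eq_opt: "\<And>i \<theta> \<xi>. i \<in> I \<Longrightarrow> admissible M F T (E i) \<theta> \<xi> \<Longrightarrow>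
        util_exists M (\<lambda>\<omega>. U i (wealth T \<pi> A (C i) (E i) (\<gamma> i) \<theta> \<xi> \<omega>)) \<Longrightarrow>
        util_val M (\<lambda>\<omega>. U i (wealth T \<pi> A (C i) (E i) (\<gamma> i) \<theta> \<xi> \<omega>))
          \<le> util_val M (\<lambda>\<omega>. U i (wealth T \<pi> A (C i) (E i) (\<gamma> i) (\<theta>s i) (\<xi>s i) \<omega>))"
  shows "(\<exists>Q. equiv_prob Q M \<and> martingale_on Q F T A)
    \<and> (\<forall>i\<in>I. \<forall>t<T. AE \<omega> in M. \<xi>s i t \<omega> = abatement (C i t) (E i t) (A t \<omega>) \<omega>)
    \<and> (AE \<omega> in M. A T \<omega> =
         (if (\<Sum>i\<in>I. (\<Sum>t<T. E i t \<omega> - \<xi>s i t \<omega>) - \<gamma> i \<omega>) \<ge> 0 then \<pi> else 0))"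
proof -
  interpret allowance_market_equilibrium M F T I E C \<pi> \<gamma> U A \<theta>s \<xi>s
    by (intro allowance_market_equilibrium.intro filtered_prob_space.intro
        filtered_prob_space_axioms.intro allowance_market_equilibrium_axioms.intro) (fact assms)+
  show ?thesis
    using equivalent_martingale_measure optimal_abatement terminal_price
    unfolding aggregate_excess_def by blast
qed

end
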